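(* For $N\ge1$ start the one-dimensional nearest-neighbor symmetric simple exclusion process from the deterministic configuration $\xi^{\gamma_1,N}(x)=1$ for $|x|\le N$ and $\xi^{\gamma_1,N}(x)=0$ otherwise, and fix $T>0$. There is $c_1=c_1(T)>0$ such that for all $a\ge0$: $$\limsup_{N\to\infty}\frac1N\log P\big(|J_{-1,0}(N^2T)|/N\ge a\big)\le\begin{cases}-c_1a^2,&0\le a\le1,\\-\infty,&a>1,\end{cases}$$ $$\limsup_{N\to\infty}\frac1N\log P\big(|X_{N^2T}|/N\ge a\big)\le -c_1a^2.$$
   Context: The process $\eta_t$ on $\{0,1\}^{\mathbb Z}$ has generator $(L\phi)(\eta)=\frac12\sum_x[\eta(x)(1-\eta(x+1))+\eta(x+1)(1-\eta(x))](\phi(\eta^{x,x+1})-\phi(\eta))$, where $\eta^{x,x+1}$ exchanges the values at $x$ and $x+1$. $J_{-1,0}(t)$ is the number of jumps from $-1$ to $0$ minus the number of jumps from $0$ to $-1$ during $[0,t]$. $X_t$ is the position at time $t$ of the tagged particle initially at the origin. *)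

theory Defs
  imports "HOL-Probability.Probability"
begin

text \<open>Labelled representation of the nearest-neighbour SSEP on Z started from
 the configuration with particles exactly at the sites x with abs x \<le> N.
 Particles carry labels i in {-N..N}; particle i starts at site i (so the tagged
 particle initially at the origin has label 0).  A state is (pos, J): pos i is
 the current position of particle i, J the current J_{-1,0}.\<close>

type_synonym sstate = "(int \<Rightarrow> int) \<times> int"

definition labels :: "nat \<Rightarrow> int set" where
  "labels N = {- int N .. int N}"

definition occupied :: "nat \<Rightarrow> sstate \<Rightarrow> int set" where
  "occupied N s = fst s ` labels N"

definition try_jump :: "nat \<Rightarrow> sstate \<Rightarrow> int \<Rightarrow> int \<Rightarrow> sstate" where
  "try_jump N s i d =
     (let p = fst s i in
      if p + d \<in> occupied N s then s
      else ((fst s)(i := p + d),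
            snd s + (if p = -1 \<and> d = 1 then 1 else if p = 0 \<and> d = -1 then -1 else 0)))"

text \<open>Uniformised jump kernel with uniformisation rate lambda = 2N+1: each
 particle attempts each of its two jumps at rate 1/2.\<close>
definition kernel :: "nat \<Rightarrow> sstate \<Rightarrow> sstate pmf" where
  "kernel N s = pmf_of_set (labels N) \<bind> (\<lambda>i. pmf_of_set {-1, 1::int} \<bind>
                  (\<lambda>d. return_pmf (try_jump N s i d)))"

definition init_state :: sstate where
  "init_state = ((\<lambda>i. i), 0)"

definition iter_law :: "nat \<Rightarrow> nat \<Rightarrow> sstate pmf" where
  "iter_law N n = ((\<lambda>p. p \<bind> kernel N) ^^ n) (return_pmf init_state)"

definition unif_rate :: "nat \<Rightarrow> real" where
  "unif_rate N = 2 * real N + 1"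

text \<open>Probability that the state at time t lies in A (uniformisation formula
 P_t = sum_n Poisson(lambda t)(n) K^n, valid for t \<ge> 0).\<close>
definition ssep_prob :: "nat \<Rightarrow> real \<Rightarrow> sstate set \<Rightarrow> real" where
  "ssep_prob N t A = (\<Sum>n. exp (- unif_rate N * t) * (unif_rate N * t) ^ n / fact n
                         * measure_pmf.prob (iter_law N n) A)"

definition eln :: "real \<Rightarrow> ereal" where
  "eln p = (if p \<le> 0 then - \<infinity> else ereal (ln p))"

end

theory Submission
  imports Defs
begin

(* The current and the tagged particle are both controlled through linear statistics
   sum_i h(x_i) of the particle positions. Under the exclusion dynamics the expected one-step
   change of such a statistic is the same as for independent walkers, because a blocked jump
   x -> x + 1 and the blocked jump x + 1 -> x have opposite increments. Running the discrete heat
   equation h_k = P h_(k+1) backwards from the test function therefore makes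
   exp (theta * sum_i h_k(x_i(k))) a supermartingale up to a factor exp (theta^2 Q_k), where Q_k is
   bounded by the squared gradient of h_k.

   J_(-1,0) is the number of particles in [0, oo) minus N + 1, the statistic of the Heaviside
   function. By the Nash inequality the squared heat kernel sums to O(N sqrt T) over the N^2 T
   steps, which gives Chernoff bounds exp (- c a^2 N); since |J| <= N + 1 the bound is -oo for
   a > 1. Particles never overtake each other, so X >= a N forces all N + 1 particles with
   nonnegative labels beyond a N. For small a this is detected by the Heaviside function shifted
   by a N, whose initial statistic falls short of N + 1 by a multiple of a N because the heat kernel
   keeps a fixed fraction of its mass within distance N / 2; for large a the ramp max(0, x) / N
   is used instead. Finally the process is the uniformised chain run for a Poisson number of steps,
   which exceeds 2 e times its mean only with probability exp (- mean). *)

lemma exp_le_one_plus_quadratic: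
  fixes u B :: real
  assumes "\<bar>u\<bar> \<le> B"
  shows "exp u \<le> 1 + u + u^2 * exp B / 2"
proof -
  obtain t where t: "\<bar>t\<bar> \<le> \<bar>u\<bar>" "exp u = (\<Sum>m<2. u ^ m / fact m) + exp t / fact 2 * u ^ 2"
    using Maclaurin_exp_le[of u 2] by blast
  have "exp t * u^2 \<le> exp B * u^2"
    using t(1) assms by (intro mult_right_mono) auto
  then show ?thesis
    using t(2) by (simp add: numeral_2_eq_2 mult.commute)
qed

lemma exp_le_two:
  fixes x :: real
  assumes "0 \<le> x" "x \<le> 1/2"
  shows "exp x \<le> 2"
proof -
  have "exp x \<le> 1 + x + x^2" using exp_bound assms by simp
  moreover have "x^2 \<le> x" using assms by (simp add: power2_eq_square mult_left_le_one_le)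
  ultimately show ?thesis using assms by linarith
qed

lemma exp_shift_le:
  fixes \<theta> Z y g G :: real
  assumes "\<bar>y\<bar> \<le> \<bar>g\<bar>" "\<bar>g\<bar> \<le> G"
  shows "exp (\<theta> * (Z + y)) \<le> exp (\<theta> * Z) * (1 + \<theta> * y + \<theta>^2 * exp (\<bar>\<theta>\<bar> * G) / 2 * g^2)"
proof -
  have "\<bar>\<theta> * y\<bar> \<le> \<bar>\<theta>\<bar> * G" using assms by (simp add: abs_mult mult_left_mono)
  then have "exp (\<theta> * y) \<le> 1 + \<theta> * y + (\<theta> * y)^2 * exp (\<bar>\<theta>\<bar> * G) / 2"
    by (rule exp_le_one_plus_quadratic)
  moreover have "(\<theta> * y)^2 * exp (\<bar>\<theta>\<bar> * G) / 2 \<le> \<theta>^2 * exp (\<bar>\<theta>\<bar> * G) / 2 * g^2"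
    using mult_left_mono[OF power_mono[OF assms(1), of 2], of "\<theta>^2 * exp (\<bar>\<theta>\<bar> * G) / 2"]
    by (simp add: power_mult_distrib ac_simps)
  ultimately have "exp (\<theta> * y) \<le> 1 + \<theta> * y + \<theta>^2 * exp (\<bar>\<theta>\<bar> * G) / 2 * g^2" by linarith
  then have "exp (\<theta> * Z) * exp (\<theta> * y) \<le> exp (\<theta> * Z) * (1 + \<theta> * y + \<theta>^2 * exp (\<bar>\<theta>\<bar> * G) / 2 * g^2)"
    by (rule mult_left_mono) simp
  then show ?thesis by (metis distrib_left exp_add)
qed

lemma sq_diff_le_gradient:
  fixes a b \<epsilon> :: real
  assumes "\<epsilon> > 0"
  shows "a^2 - b^2 \<le> \<epsilon> * (b - a)^2 + (a^2 + b^2) / (2 * \<epsilon>)"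
proof -
  \<comment> \<open>AM-GM applied to (a - b) (a + b), then (a + b)^2 \<le> 2 (a^2 + b^2)\<close>
  have "0 \<le> (2 * \<epsilon> * (a - b) - (a + b))^2 + (a - b)^2" by simp
  then have "4 * \<epsilon> * (a^2 - b^2) \<le> 4 * \<epsilon>^2 * (b - a)^2 + 2 * (a^2 + b^2)"
    by (simp add: power2_eq_square algebra_simps)
  then show ?thesis using assms by (simp add: field_simps power2_eq_square)
qed

lemma div_sqrt_le_sqrt_increment:
  fixes A r :: real
  assumes A: "A \<ge> 1" and r: "0 \<le> r" "r \<le> 1"
  shows "r / sqrt A \<le> 6 * (sqrt (A + r/2) - sqrt A)"
proof -
  define B where "B = A + r / 2"
  have sA: "sqrt A > 0" using A by simp
  have sB: "sqrt B \<le> 2 * sqrt A"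
  proof -
    have "sqrt B \<le> sqrt (4 * A)" using A r by (intro real_sqrt_le_mono) (simp add: B_def)
    then show ?thesis by (simp add: real_sqrt_mult)
  qed
  have sB0: "sqrt B \<ge> 0" using A r by (simp add: B_def)
  have prod: "(sqrt B - sqrt A) * (sqrt B + sqrt A) = r / 2"
    using A r by (simp add: B_def algebra_simps power2_eq_square[symmetric])
  have pos: "sqrt B + sqrt A > 0" using sA sB0 by linarith
  then have diff: "sqrt B - sqrt A = (r / 2) / (sqrt B + sqrt A)"
    unfolding prod[symmetric] by simp
  have "r / sqrt A = 6 * ((r / 2) / (3 * sqrt A))" using sA by (simp add: field_simps)
  also have "(r / 2) / (3 * sqrt A) \<le> (r / 2) / (sqrt B + sqrt A)"
    using sA sB pos r by (intro divide_left_mono) (auto intro: mult_pos_pos)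
  also have "\<dots> = sqrt B - sqrt A" by (rule diff[symmetric])
  finally show ?thesis by (simp add: B_def)
qed

lemma inverse_square_gain:
  fixes v v' r :: real
  assumes "0 < v'" "v' \<le> v - r * v^3 / 4" "0 < v" "v \<le> 1" "0 \<le> r" "r \<le> 1/4"
  shows "1 / v^2 + r / 2 \<le> 1 / v'^2"
proof -
  define s where "s = r * v^2 / 4"
  have s: "0 \<le> s" "s \<le> 1/16"
    using assms mult_mono[of r "1/4" "v^2" 1] by (auto simp: s_def power_le_one)
  have "v' \<le> v * (1 - s)" using assms(2) by (simp add: s_def power3_eq_cube power2_eq_square algebra_simps)
  then have "v'^2 \<le> (v * (1 - s))^2" using assms(1) by (intro power_mono) auto
  then have "1 / (v * (1 - s))^2 \<le> 1 / v'^2"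
    using assms(1,3) s by (intro divide_left_mono) auto
  moreover have "(1 + 2 * s) * (v * (1 - s))^2 \<le> v^2"
  proof -
    have "(1 + 2 * s) * (v * (1 - s))^2 = v^2 * (1 - s^2 * (3 - 2 * s))"
      by (simp add: power2_eq_square algebra_simps)
    moreover have "s^2 * (3 - 2 * s) \<ge> 0" using s by simp
    ultimately show ?thesis by (simp add: mult_left_le)
  qed
  then have "1 / v^2 + r / 2 \<le> 1 / (v * (1 - s))^2"
    using assms(3) s by (simp add: s_def field_simps)
  ultimately show ?thesis by simp
qed

lemma sum_fun_upd:
  fixes \<phi> :: "'b \<Rightarrow> 'c::ab_group_add"
  assumes "finite L" "i \<in> L"
  shows "(\<Sum>j\<in>L. \<phi> ((f(i := v)) j)) = (\<Sum>j\<in>L. \<phi> (f j)) - \<phi> (f i) + \<phi> v"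
proof -
  have "(\<Sum>j\<in>L-{i}. \<phi> ((f(i := v)) j)) = (\<Sum>j\<in>L-{i}. \<phi> (f j))"
    by (rule sum.cong) auto
  then show ?thesis
    using assms by (simp add: sum.remove algebra_simps)
qed

lemma sum_int_shift:
  fixes f :: "int \<Rightarrow> 'b::comm_monoid_add"
  shows "(\<Sum>z\<in>{a..b}. f (z + c)) = (\<Sum>w\<in>{a+c..b+c}. f w)"
  by (rule sum.reindex_bij_witness[of _ "\<lambda>w. w - c" "\<lambda>z. z + c"]) auto

lemma sum_centered_shift:
  fixes f :: "int \<Rightarrow> 'b::comm_monoid_add"
  assumes "\<And>w. K \<le> \<bar>w\<bar> \<Longrightarrow> f w = 0" and "\<bar>c\<bar> \<le> 1"
  shows "(\<Sum>z\<in>{-K..K}. f (z + c)) = (\<Sum>z\<in>{-K..K}. f z)"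
  unfolding sum_int_shift using assms by (intro sum.mono_neutral_cong) auto

lemma sum_int_telescope:
  fixes f :: "int \<Rightarrow> 'b::ab_group_add"
  shows "a \<le> b + 1 \<Longrightarrow> (\<Sum>y\<in>{a..b}. f y - f (y + 1)) = f a - f (b + 1)"
proof (induction "nat (b + 1 - a)" arbitrary: b)
  case (Suc n)
  then have "{a..b} = insert b {a..b - 1}" by auto
  then show ?case
    using Suc.hyps(1)[of "b - 1"] Suc.hyps(2) by simp
qed simp

lemma sum_reflect_interval:
  fixes f :: "int \<Rightarrow> 'b::comm_monoid_add"
  assumes "\<sigma> \<in> {1, -1}"
  shows "(\<Sum>i\<in>{-K..K}. f (\<sigma> * i)) = (\<Sum>i\<in>{-K..K}. f i)"
  using assms by (auto intro: sum.reindex_bij_witness[of _ uminus uminus])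

lemma sum_mul_laplacian:
  fixes p :: "int \<Rightarrow> real"
  assumes vanish: "\<And>z. K - 1 \<le> \<bar>z\<bar> \<Longrightarrow> p z = 0"
  shows "(\<Sum>z\<in>{-K..K}. p z * (p (z + 1) + p (z - 1) - 2 * p z)) = - (\<Sum>z\<in>{-K..K}. (p (z + 1) - p z)^2)"
proof -
  have "(\<Sum>z\<in>{-K..K}. p z * p (z - 1)) = (\<Sum>z\<in>{-K..K}. p (z + 1) * p z)"
    using sum_centered_shift[where f="\<lambda>z. p z * p (z - 1)" and K=K and c=1] vanish by simp
  moreover have "(\<Sum>z\<in>{-K..K}. (p (z + 1))^2) = (\<Sum>z\<in>{-K..K}. (p z)^2)"
    using sum_centered_shift[where f="\<lambda>z. (p z)^2" and K=K and c=1] vanish by simp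
  ultimately show ?thesis
    by (simp add: power2_eq_square algebra_simps sum.distrib sum_subtractf sum_distrib_left)
qed

lemma sum_sq_laplacian_le:
  fixes p :: "int \<Rightarrow> real"
  assumes vanish: "\<And>z. K - 1 \<le> \<bar>z\<bar> \<Longrightarrow> p z = 0"
  shows "(\<Sum>z\<in>{-K..K}. (p (z + 1) + p (z - 1) - 2 * p z)^2) \<le> 4 * (\<Sum>z\<in>{-K..K}. (p (z + 1) - p z)^2)"
proof -
  define D where "D z = p (z + 1) - p z" for z
  have "(p (z + 1) + p (z - 1) - 2 * p z)^2 \<le> 2 * (D z)^2 + 2 * (D (z - 1))^2" for z
    using sum_squares_ge_zero[of "D z + D (z - 1)" 0]
    by (simp add: D_def power2_eq_square algebra_simps)
  then have "(\<Sum>z\<in>{-K..K}. (p (z + 1) + p (z - 1) - 2 * p z)^2)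
      \<le> 2 * (\<Sum>z\<in>{-K..K}. (D z)^2) + 2 * (\<Sum>z\<in>{-K..K}. (D (z - 1))^2)"
    by (simp add: sum_mono sum.distrib[symmetric] sum_distrib_left)
  also have "(\<Sum>z\<in>{-K..K}. (D (z - 1))^2) = (\<Sum>z\<in>{-K..K}. (D z)^2)"
    using sum_centered_shift[where f="\<lambda>z. (D z)^2" and K=K and c="-1"] vanish by (simp add: D_def)
  finally show ?thesis by (simp add: D_def)
qed

lemma sq_le_dirichlet_energy:
  fixes p :: "int \<Rightarrow> real"
  assumes vanish: "\<And>z. K - 1 \<le> \<bar>z\<bar> \<Longrightarrow> p z = 0" and z0: "z0 \<in> {-K..K}" and "\<epsilon> > 0"
  shows "(p z0)^2 \<le> \<epsilon> * (\<Sum>z\<in>{-K..K}. (p (z + 1) - p z)^2) + (\<Sum>z\<in>{-K..K}. (p z)^2) / \<epsilon>"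
proof -
  \<comment> \<open>telescoping p(z0)^2 down to p(K+1)^2 = 0 and splitting each difference by AM-GM\<close>
  define t where "t y = \<epsilon> * (p (y + 1) - p y)^2 + ((p y)^2 + (p (y + 1))^2) / (2 * \<epsilon>)" for y
  have "(\<Sum>y\<in>{z0..K}. (p y)^2 - (p (y + 1))^2) = (p z0)^2 - (p (K + 1))^2"
    using z0 sum_int_telescope[of z0 K "\<lambda>y. (p y)^2"] by simp
  then have "(p z0)^2 = (\<Sum>y\<in>{z0..K}. (p y)^2 - (p (y + 1))^2)" using vanish[of "K + 1"] by simp
  also have "\<dots> \<le> (\<Sum>y\<in>{z0..K}. t y)"
    unfolding t_def using assms(3) by (intro sum_mono sq_diff_le_gradient)
  also have "\<dots> \<le> (\<Sum>y\<in>{-K..K}. t y)"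
    using z0 assms(3) by (intro sum_mono2) (auto simp: t_def)
  also have "\<dots> = \<epsilon> * (\<Sum>z\<in>{-K..K}. (p (z + 1) - p z)^2)
      + ((\<Sum>z\<in>{-K..K}. (p z)^2) + (\<Sum>y\<in>{-K..K}. (p (y + 1))^2)) / (2 * \<epsilon>)"
    by (simp add: t_def sum.distrib sum_distrib_left sum_divide_distrib add_divide_distrib)
  also have "(\<Sum>y\<in>{-K..K}. (p (y + 1))^2) = (\<Sum>z\<in>{-K..K}. (p z)^2)"
    using vanish by (intro sum_centered_shift[where f="\<lambda>z. (p z)^2" and c=1]) simp_all
  finally show ?thesis by simp
qed

lemma nash_inequality:
  fixes p :: "int \<Rightarrow> real"
  assumes vanish: "\<And>z. K - 1 \<le> \<bar>z\<bar> \<Longrightarrow> p z = 0" and nonneg: "\<And>z. p z \<ge> 0"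
    and mass: "(\<Sum>z\<in>{-K..K}. p z) = 1"
  shows "(\<Sum>z\<in>{-K..K}. (p z)^2)^3 \<le> 4 * (\<Sum>z\<in>{-K..K}. (p (z + 1) - p z)^2)"
proof -
  define I where "I = {-K..K}"
  define u where "u = (\<Sum>z\<in>I. (p z)^2)"
  define E where "E = (\<Sum>z\<in>I. (p (z + 1) - p z)^2)"
  have "I \<noteq> {}" using mass unfolding I_def by (metis sum.empty zero_neq_one)
  then have "Max (p ` I) \<in> p ` I" by (intro Max_in) (auto simp: I_def)
  then obtain z0 where z0: "z0 \<in> I" "p z0 = Max (p ` I)" by auto
  have "p z \<le> p z0" if "z \<in> I" for z
    using that z0(2) by (auto simp: I_def intro!: Max_ge)
  then have "u \<le> (\<Sum>z\<in>I. p z0 * p z)"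
    unfolding u_def power2_eq_square by (intro sum_mono mult_right_mono nonneg)
  then have u_le_max: "u \<le> p z0" using mass by (simp add: sum_distrib_left[symmetric] I_def)
  have u_pos: "u > 0"
  proof -
    have "u \<noteq> 0"
    proof
      assume "u = 0"
      then have "\<forall>z\<in>I. p z = 0" by (simp add: u_def I_def sum_nonneg_eq_0_iff)
      then show False using mass by (simp add: I_def)
    qed
    then show ?thesis by (simp add: u_def sum_nonneg order_less_le)
  qed
  have "u^2 \<le> (p z0)^2" using u_le_max u_pos by (simp add: power_mono)
  also have "\<dots> \<le> 2 * E / u + u^2 / 2"
    using sq_le_dirichlet_energy[OF vanish z0(1)[unfolded I_def], where \<epsilon>="2 / u"] u_pos
    by (simp add: u_def E_def I_def power2_eq_square)
  finally have "u^2 * u \<le> 4 * E" using u_pos by (simp add: field_simps)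
  then show ?thesis by (simp add: u_def E_def I_def power3_eq_cube power2_eq_square)
qed

lemma sum_blocked_jumps:
  fixes h :: "int \<Rightarrow> real"
  assumes "finite X"
  shows "(\<Sum>x\<in>X. (if x + 1 \<in> X then 0 else h (x + 1) - h x) + (if x - 1 \<in> X then 0 else h (x - 1) - h x))
       = (\<Sum>x\<in>X. h (x + 1) + h (x - 1) - 2 * h x)"
proof -
  have drop: "(\<Sum>x\<in>X. if P x then 0 else f x) = (\<Sum>x\<in>X. f x) - (\<Sum>x\<in>{x\<in>X. P x}. f x)"
    for P and f :: "int \<Rightarrow> real"
  proof -
    have "(\<Sum>x\<in>X. f x) = (\<Sum>x\<in>X. if P x then 0 else f x) + (\<Sum>x\<in>X. if P x then f x else 0)"
      by (simp add: sum.distrib[symmetric]) (rule sum.cong; simp)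
    then show ?thesis using sum.inter_filter[OF assms, where P=P and g=f] by simp
  qed
  have cancel: "(\<Sum>x\<in>{x\<in>X. x - 1 \<in> X}. h (x - 1) - h x) = - (\<Sum>x\<in>{x\<in>X. x + 1 \<in> X}. h (x + 1) - h x)"
    unfolding sum_negf[symmetric]
    by (rule sum.reindex_bij_witness[of _ "\<lambda>x. x + 1" "\<lambda>x. x - 1"]) auto
  show ?thesis
    unfolding sum.distrib drop cancel by (simp add: sum_subtractf[symmetric] sum.distrib[symmetric] algebra_simps)
qed

lemma prob_le_exp_moment:
  fixes p :: "'a pmf"
  assumes "\<theta> \<ge> 0" and B: "(\<integral>\<^sup>+s. ennreal (exp (\<theta> * f s)) \<partial>p) \<le> ennreal B"
    and "B \<ge> 0" and A: "\<And>s. s \<in> set_pmf p \<Longrightarrow> s \<in> A \<Longrightarrow> b \<le> f s"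
  shows "measure_pmf.prob p A \<le> exp (- \<theta> * b) * B"
proof -
  have "(\<integral>\<^sup>+s. ennreal (exp (\<theta> * b)) * indicator A s \<partial>p) \<le> (\<integral>\<^sup>+s. ennreal (exp (\<theta> * f s)) \<partial>p)"
    using A \<open>\<theta> \<ge> 0\<close>
    by (intro nn_integral_mono_AE AE_pmfI) (auto simp: indicator_def intro: mult_left_mono)
  then have "ennreal (exp (\<theta> * b) * measure_pmf.prob p A) \<le> ennreal B"
    using B by (simp add: nn_integral_cmult_indicator measure_pmf.emeasure_eq_measure ennreal_mult)
  then have "exp (\<theta> * b) * measure_pmf.prob p A \<le> B" using \<open>B \<ge> 0\<close> by simp
  then show ?thesis by (simp add: exp_minus field_simps mult.commute)
qed

lemma prob_abs_ge_le:
  fixes p :: "'a pmf" and g :: "'a \<Rightarrow> real"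
  shows "measure_pmf.prob p {s. b \<le> \<bar>g s\<bar>} \<le> measure_pmf.prob p {s. b \<le> g s} + measure_pmf.prob p {s. b \<le> - g s}"
proof -
  have "{s. b \<le> \<bar>g s\<bar>} = {s. b \<le> g s} \<union> {s. b \<le> - g s}" by (auto simp: abs_if split: if_split_asm)
  then show ?thesis by (simp add: measure_Un_le)
qed

lemma prob_deviation_le:
  fixes p :: "'a pmf"
  assumes "\<theta> \<ge> 0" "B1 \<ge> 0" "B2 \<ge> 0"
    and "(\<integral>\<^sup>+s. ennreal (exp (\<theta> * f s)) \<partial>p) \<le> ennreal B1"
    and "(\<integral>\<^sup>+s. ennreal (exp (- \<theta> * f s)) \<partial>p) \<le> ennreal B2"
    and dev: "\<And>s. s \<in> set_pmf p \<Longrightarrow> s \<in> A \<Longrightarrow> b \<le> \<bar>f s - c\<bar>"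
  shows "measure_pmf.prob p A \<le> exp (- \<theta> * (c + b)) * B1 + exp (- \<theta> * (b - c)) * B2"
proof -
  have "A = {s\<in>A. c \<le> f s} \<union> {s\<in>A. f s < c}" by auto
  then have "measure_pmf.prob p A = measure_pmf.prob p ({s\<in>A. c \<le> f s} \<union> {s\<in>A. f s < c})"
    by simp
  also have "\<dots> \<le> measure_pmf.prob p {s\<in>A. c \<le> f s} + measure_pmf.prob p {s\<in>A. f s < c}"
    by (rule measure_Un_le) simp_all
  also have "measure_pmf.prob p {s\<in>A. c \<le> f s} \<le> exp (- \<theta> * (c + b)) * B1"
  proof (rule prob_le_exp_moment[OF assms(1,4,2)])
    show "c + b \<le> f s" if "s \<in> set_pmf p" "s \<in> {s\<in>A. c \<le> f s}" for s
      using dev[OF that(1)] that(2) by (simp add: abs_of_nonneg)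
  qed
  also have "measure_pmf.prob p {s\<in>A. f s < c} \<le> exp (- \<theta> * (b - c)) * B2"
  proof (rule prob_le_exp_moment[where f="\<lambda>s. - f s", OF assms(1) _ assms(3)])
    show "(\<integral>\<^sup>+s. ennreal (exp (\<theta> * - f s)) \<partial>p) \<le> ennreal B2" using assms(5) by simp
    show "b - c \<le> - f s" if "s \<in> set_pmf p" "s \<in> {s\<in>A. f s < c}" for s
      using dev[OF that(1)] that(2) by (simp add: abs_of_neg)
  qed
  finally show ?thesis by simp
qed

lemma poisson_weights_sums: "(\<lambda>n. exp (- \<mu>) * \<mu> ^ n / fact n) sums (1::real)"
proof -
  have "(\<lambda>n. \<mu> ^ n / fact n) sums exp \<mu>"
    using exp_converges[of \<mu>] by (simp add: divide_inverse mult.commute)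
  from sums_mult[OF this, of "exp (- \<mu>)"] show ?thesis by (simp add: exp_add[symmetric])
qed

lemma summable_poisson_mixture:
  fixes \<mu> :: real
  assumes "\<mu> \<ge> 0" "\<And>n. 0 \<le> P n \<and> P n \<le> 1"
  shows "summable (\<lambda>n. exp (- \<mu>) * \<mu> ^ n / fact n * P n)"
proof (rule summable_comparison_test[where g="\<lambda>n. exp (- \<mu>) * \<mu> ^ n / fact n"])
  show "summable (\<lambda>n. exp (- \<mu>) * \<mu> ^ n / fact n)"
    using poisson_weights_sums by (rule sums_summable)
  show "\<exists>N. \<forall>n\<ge>N. norm (exp (- \<mu>) * \<mu> ^ n / fact n * P n) \<le> exp (- \<mu>) * \<mu> ^ n / fact n"
  proof (intro exI allI impI)
    fix n :: nat
    let ?w = "exp (- \<mu>) * \<mu> ^ n / fact n"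
    have "?w \<ge> 0" using assms(1) by simp
    then have "norm (?w * P n) = ?w * P n" unfolding real_norm_def using assms(2)[of n]
      by (intro abs_of_nonneg mult_nonneg_nonneg) auto
    also have "\<dots> \<le> ?w * 1" using \<open>?w \<ge> 0\<close> assms(2)[of n] by (intro mult_left_mono) auto
    finally show "norm (?w * P n) \<le> ?w" by simp
  qed
qed

lemma poisson_mixture_le:
  fixes P :: "nat \<Rightarrow> real" and \<mu> :: real
  assumes "\<mu> \<ge> 0" and P01: "\<And>n. 0 \<le> P n \<and> P n \<le> 1"
    and typical: "\<And>n. real n \<le> 2 * exp 1 * \<mu> \<Longrightarrow> P n \<le> B" and "B \<ge> 0"
  shows "(\<Sum>n. exp (- \<mu>) * \<mu> ^ n / fact n * P n) \<le> B + exp (- \<mu>)"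
proof -
  define w where "w n = exp (- \<mu>) * \<mu> ^ n / fact n" for n
  \<comment> \<open>Chernoff bound for the Poisson tail: 1 \<le> e^(n - 2 e \<mu>) when n > 2 e \<mu>\<close>
  define g where "g n = B * w n + exp (- 2 * exp 1 * \<mu>) * exp (- \<mu>) * ((exp 1 * \<mu>) ^ n / fact n)" for n
  have gsum: "g sums (B * 1 + exp (- 2 * exp 1 * \<mu>) * exp (- \<mu>) * exp (exp 1 * \<mu>))"
    unfolding g_def w_def
    using exp_converges[of "exp 1 * \<mu>"]
    by (intro sums_add sums_mult poisson_weights_sums) (simp add: divide_inverse mult.commute)
  have "w n * P n \<le> g n" for n
  proof -
    have "P n \<le> B + exp (real n - 2 * exp 1 * \<mu>)"
    proof (cases "real n \<le> 2 * exp 1 * \<mu>")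
      case True
      then show ?thesis using typical[of n] by (simp add: add_increasing2)
    next
      case False
      then have "1 \<le> exp (real n - 2 * exp 1 * \<mu>)" by simp
      then show ?thesis using P01[of n] \<open>B \<ge> 0\<close> by linarith
    qed
    then have "w n * P n \<le> w n * (B + exp (real n - 2 * exp 1 * \<mu>))"
      using assms(1) by (intro mult_left_mono) (simp_all add: w_def)
    moreover have "exp (real n - 2 * exp 1 * \<mu>) = exp 1 ^ n * exp (- 2 * exp 1 * \<mu>)"
      by (simp add: exp_diff exp_of_nat_mult[symmetric] divide_inverse exp_minus)
    then have "w n * exp (real n - 2 * exp 1 * \<mu>) = exp (- 2 * exp 1 * \<mu>) * exp (- \<mu>) * ((exp 1 * \<mu>) ^ n / fact n)"
      by (simp add: w_def power_mult_distrib)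
    ultimately show ?thesis unfolding g_def by (simp add: distrib_left mult.commute)
  qed
  then have "(\<Sum>n. w n * P n) \<le> B * 1 + exp (- 2 * exp 1 * \<mu>) * exp (- \<mu>) * exp (exp 1 * \<mu>)"
    using summable_poisson_mixture[OF assms(1,2)] by (intro sums_le[OF _ summable_sums gsum]) (auto simp: w_def)
  also have "\<dots> = B + exp (- \<mu> - exp 1 * \<mu>)" by (simp add: exp_add[symmetric])
  also have "\<dots> \<le> B + exp (- \<mu>)" using assms(1) by simp
  finally show ?thesis by (simp add: w_def)
qed

lemma eventually_real_ge: "\<forall>\<^sub>F N in sequentially. c \<le> real N"
  using filterlim_real_sequentially by (simp add: filterlim_at_top)

lemma limsup_scaled_eln_le:
  assumes ev: "\<forall>\<^sub>F N in sequentially. P N \<le> C * exp (- \<beta> * real N)" and C: "C > 0"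
  shows "limsup (\<lambda>N::nat. ereal (1 / real N) * eln (P N)) \<le> ereal (- \<beta>)"
proof -
  have "\<forall>\<^sub>F N in sequentially. ereal (1 / real N) * eln (P N) \<le> ereal (ln C / real N - \<beta>)"
    using ev eventually_gt_at_top[of "0::nat"]
  proof eventually_elim
    case (elim N)
    show ?case
    proof (cases "P N \<le> 0")
      case False
      then have "ln (P N) \<le> ln (C * exp (- \<beta> * real N))"
        using elim C by (intro ln_mono) auto
      then have "ln (P N) \<le> ln C - \<beta> * real N" using C by (simp add: ln_mult)
      then have "ln (P N) / real N \<le> ln C / real N - \<beta>"
        using elim(2) by (simp add: divide_right_mono diff_divide_distrib[symmetric] field_simps)
      then show ?thesis using False by (simp add: eln_def)
    qed (use elim in \<open>simp add: eln_def\<close>)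
  qed
  then have "limsup (\<lambda>N::nat. ereal (1 / real N) * eln (P N)) \<le> limsup (\<lambda>N::nat. ereal (ln C / real N - \<beta>))"
    by (rule Limsup_mono)
  also have "\<dots> = ereal (0 - \<beta>)"
    by (intro lim_imp_Limsup tendsto_ereal tendsto_diff lim_const_over_n tendsto_const) simp
  finally show ?thesis by simp
qed

lemma limsup_scaled_eln_neg_inf:
  assumes "\<forall>\<^sub>F N in sequentially. P N \<le> 0"
  shows "limsup (\<lambda>N::nat. ereal (1 / real N) * eln (P N)) \<le> - \<infinity>"
proof -
  have "\<forall>\<^sub>F N in sequentially. ereal (1 / real N) * eln (P N) \<le> - \<infinity>"
    using assms eventually_gt_at_top[of "0::nat"] by eventually_elim (simp add: eln_def)
  then have "limsup (\<lambda>N::nat. ereal (1 / real N) * eln (P N)) \<le> limsup (\<lambda>N::nat. - \<infinity>::ereal)"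
    by (rule Limsup_mono)
  also have "\<dots> = - \<infinity>" by (rule Limsup_const) simp
  finally show ?thesis .
qed

lemma limsup_scaled_eln_mono:
  assumes "\<And>N. P N \<le> P' N"
  shows "limsup (\<lambda>N::nat. ereal (1 / real N) * eln (P N)) \<le> limsup (\<lambda>N::nat. ereal (1 / real N) * eln (P' N))"
proof (rule Limsup_mono[OF always_eventually], rule allI)
  fix N :: nat
  have "eln (P N) \<le> eln (P' N)" using assms[of N] by (auto simp: eln_def)
  then show "ereal (1 / real N) * eln (P N) \<le> ereal (1 / real N) * eln (P' N)"
    by (rule ereal_mult_left_mono) simp
qed

section \<open>The lazy random walk\<close>

definition heat_step :: "real \<Rightarrow> (int \<Rightarrow> real) \<Rightarrow> int \<Rightarrow> real" where
  "heat_step r f x = f x + r * (f (x + 1) + f (x - 1) - 2 * f x)"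

definition heaviside :: "int \<Rightarrow> real" where
  "heaviside x = (if 0 \<le> x then 1 else 0)"

text \<open>heat_step r is the transition operator of the lazy walk that moves by +1 and by -1 with
  probability r each; heat_kernel r m z is the probability that it goes from 0 to z in m steps, and
  heat_cdf r m its distribution function.\<close>

definition heat_cdf :: "real \<Rightarrow> nat \<Rightarrow> int \<Rightarrow> real" where
  "heat_cdf r m = (heat_step r ^^ m) heaviside"

definition heat_kernel :: "real \<Rightarrow> nat \<Rightarrow> int \<Rightarrow> real" where
  "heat_kernel r m z = heat_cdf r m z - heat_cdf r m (z - 1)"

definition heat_energy :: "real \<Rightarrow> nat \<Rightarrow> real" where
  "heat_energy r m = (\<Sum>z\<in>{-int m..int m}. (heat_kernel r m z)^2)"

definition heat_mass :: "real \<Rightarrow> nat \<Rightarrow> int \<Rightarrow> real" where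
  "heat_mass r m K = (\<Sum>z\<in>{-K..K}. heat_kernel r m z)"

definition ramp :: "real \<Rightarrow> int \<Rightarrow> int \<Rightarrow> real" where
  "ramp L \<sigma> x = max 0 (real_of_int (\<sigma> * x)) / L"

lemma heat_step_convex: "heat_step r f x = (1 - 2 * r) * f x + r * f (x + 1) + r * f (x - 1)"
  by (simp add: heat_step_def algebra_simps)

lemma heat_step_diff: "heat_step r f (x + 1) - heat_step r f x = heat_step r (\<lambda>x. f (x + 1) - f x) x"
  by (simp add: heat_step_def algebra_simps)

lemma heat_step_reflect:
  assumes "\<sigma> \<in> {1, -1}"
  shows "heat_step r (\<lambda>x. f (\<sigma> * x - y)) = (\<lambda>x. heat_step r f (\<sigma> * x - y))"
  using assms by (auto simp: heat_step_def algebra_simps)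

lemma heat_cdf_0 [simp]: "heat_cdf r 0 = heaviside"
  by (simp add: heat_cdf_def)

lemma heat_cdf_Suc: "heat_cdf r (Suc m) = heat_step r (heat_cdf r m)"
  by (simp add: heat_cdf_def)

lemma heat_kernel_0: "heat_kernel r 0 z = (if z = 0 then 1 else 0)"
  by (simp add: heat_kernel_def heaviside_def)

lemma heat_kernel_Suc: "heat_kernel r (Suc m) = heat_step r (heat_kernel r m)"
  by (rule ext) (simp add: heat_kernel_def heat_cdf_Suc heat_step_def algebra_simps)

lemma heat_cdf_symmetric: "heat_cdf r m x + heat_cdf r m (- x - 1) = 1"
proof (induction m arbitrary: x)
  case 0
  then show ?case by (simp add: heaviside_def)
next
  case (Suc m)
  let ?F = "heat_cdf r m"
  have "heat_cdf r (Suc m) x + heat_cdf r (Suc m) (- x - 1) = ?F x + ?F (- x - 1)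
      + r * ((?F (x + 1) + ?F (- (x + 1) - 1)) + (?F (x - 1) + ?F (- (x - 1) - 1))
             - 2 * (?F x + ?F (- x - 1)))"
    by (simp add: heat_cdf_Suc heat_step_def algebra_simps)
  then show ?case by (simp only: Suc.IH) simp
qed

lemma heat_kernel_symmetric: "heat_kernel r m (- z) = heat_kernel r m z"
  using heat_cdf_symmetric[of r m "z - 1"] heat_cdf_symmetric[of r m z]
  by (simp add: heat_kernel_def algebra_simps)

lemma heat_kernel_abs: "heat_kernel r m \<bar>z\<bar> = heat_kernel r m z"
  by (cases "z \<ge> 0") (simp_all add: heat_kernel_symmetric)

lemma heat_kernel_eq_0: "int m < \<bar>z\<bar> \<Longrightarrow> heat_kernel r m z = 0"
  by (induction m arbitrary: z) (simp_all add: heat_kernel_0 heat_kernel_Suc heat_step_def)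

lemma heat_cdf_eq_1: "int m \<le> x \<Longrightarrow> heat_cdf r m x = 1"
  by (induction m arbitrary: x) (simp_all add: heaviside_def heat_cdf_Suc heat_step_def)

lemma heat_cdf_eq_0: "x < - int m \<Longrightarrow> heat_cdf r m x = 0"
  using heat_cdf_eq_1[of m "- x - 1" r] heat_cdf_symmetric[of r m x] by simp

lemma heat_kernel_sum_eq_1:
  assumes "int m \<le> K"
  shows "(\<Sum>z\<in>{-K..K}. heat_kernel r m z) = 1"
proof -
  have "(\<Sum>z\<in>{-K..K}. heat_kernel r m z)
      = (\<Sum>z\<in>{-K..K}. - heat_cdf r m (z - 1) - - heat_cdf r m (z + 1 - 1))"
    by (simp add: heat_kernel_def)
  also have "\<dots> = heat_cdf r m K - heat_cdf r m (- K - 1)"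
    using sum_int_telescope[of "-K" K "\<lambda>y. - heat_cdf r m (y - 1)"] assms by simp
  finally show ?thesis
    using assms heat_cdf_eq_1[of m K r] heat_cdf_eq_0[of "- K - 1" m r] by simp
qed

lemma heat_energy_eq:
  assumes "int m \<le> K"
  shows "(\<Sum>z\<in>{-K..K}. (heat_kernel r m z)^2) = heat_energy r m"
  unfolding heat_energy_def using assms by (intro sum.mono_neutral_cong) (auto simp: heat_kernel_eq_0)

lemma heat_energy_0: "heat_energy r 0 = 1"
  by (simp add: heat_energy_def heat_kernel_0)

lemma heat_energy_pos: "heat_energy r m > 0"
proof -
  have "heat_energy r m \<ge> 0" by (simp add: heat_energy_def sum_nonneg)
  moreover have "heat_energy r m \<noteq> 0"
  proof
    assume "heat_energy r m = 0"
    then have "\<forall>z\<in>{-int m..int m}. heat_kernel r m z = 0"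
      by (simp add: heat_energy_def sum_nonneg_eq_0_iff)
    then show False using heat_kernel_sum_eq_1[of m "int m" r] by simp
  qed
  ultimately show ?thesis by simp
qed

lemma heat_kernel_second_moment:
  assumes "int m + 1 \<le> K"
  shows "(\<Sum>z\<in>{-K..K}. (of_int z)^2 * heat_kernel r m z) = 2 * r * real m"
  using assms
proof (induction m arbitrary: K)
  case 0
  then show ?case by (auto simp: heat_kernel_0 intro!: sum.neutral)
next
  case (Suc m)
  let ?p = "heat_kernel r m"
  have vanish: "\<And>w. K \<le> \<bar>w\<bar> \<Longrightarrow> ?p w = 0" using Suc.prems by (intro heat_kernel_eq_0) auto
  have right: "(\<Sum>z\<in>{-K..K}. (of_int z)^2 * ?p (z + 1)) = (\<Sum>z\<in>{-K..K}. (of_int z - 1)^2 * ?p z)"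
    using sum_centered_shift[where f="\<lambda>w. (of_int w - 1)^2 * ?p w" and K=K and c=1] vanish by simp
  have left: "(\<Sum>z\<in>{-K..K}. (of_int z)^2 * ?p (z - 1)) = (\<Sum>z\<in>{-K..K}. (of_int z + 1)^2 * ?p z)"
    using sum_centered_shift[where f="\<lambda>w. (of_int w + 1)^2 * ?p w" and K=K and c="-1"] vanish by simp
  have "(\<Sum>z\<in>{-K..K}. (of_int z)^2 * heat_kernel r (Suc m) z)
     = (\<Sum>z\<in>{-K..K}. (of_int z)^2 * ?p z) + r * ((\<Sum>z\<in>{-K..K}. (of_int z)^2 * ?p (z + 1))
        + (\<Sum>z\<in>{-K..K}. (of_int z)^2 * ?p (z - 1)) - 2 * (\<Sum>z\<in>{-K..K}. (of_int z)^2 * ?p z))"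
    by (simp add: heat_kernel_Suc heat_step_def algebra_simps sum.distrib sum_subtractf sum_distrib_left)
  also have "(\<Sum>z\<in>{-K..K}. (of_int z)^2 * ?p (z + 1)) + (\<Sum>z\<in>{-K..K}. (of_int z)^2 * ?p (z - 1))
        - 2 * (\<Sum>z\<in>{-K..K}. (of_int z)^2 * ?p z) = 2 * (\<Sum>z\<in>{-K..K}. ?p z)"
    unfolding right left by (simp add: power2_eq_square algebra_simps sum.distrib sum_subtractf sum_distrib_left)
  also have "(\<Sum>z\<in>{-K..K}. ?p z) = 1" using Suc.prems by (intro heat_kernel_sum_eq_1) auto
  finally show ?case using Suc by (simp add: algebra_simps)
qed

lemma heat_mass_Suc_radius:
  assumes "0 \<le> K"
  shows "heat_mass r m (K + 1) = heat_mass r m K + 2 * heat_kernel r m (K + 1)"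
proof -
  have "{-(K + 1)..K + 1} = insert (K + 1) (insert (-(K + 1)) {-K..K})" using assms by auto
  then show ?thesis
    using assms heat_kernel_symmetric[of r m "K + 1"] by (simp add: heat_mass_def)
qed

lemma heat_mass_chebyshev:
  assumes "0 \<le> L" and nonneg: "\<And>z. heat_kernel r m z \<ge> 0"
  shows "1 - 2 * r * real m / (of_int L + 1)^2 \<le> heat_mass r m L"
proof -
  define K where "K = max L (int m + 1)"
  have window: "{-L..L} \<subseteq> {-K..K}" by (auto simp: K_def)
  have pos: "(of_int L + 1 :: real)^2 > 0" using assms by simp
  have tail: "heat_kernel r m z \<le> (of_int z)^2 * heat_kernel r m z / (of_int L + 1)^2"
    if "z \<in> {-K..K} - {-L..L}" for z
  proof -
    have "(of_int L + 1)^2 \<le> (of_int \<bar>z\<bar> :: real)^2"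
      using that assms by (intro power_mono) auto
    then have "(of_int L + 1)^2 * heat_kernel r m z \<le> (of_int z)^2 * heat_kernel r m z"
      by (intro mult_right_mono nonneg) simp
    then show ?thesis using pos by (simp add: field_simps)
  qed
  have "1 = (\<Sum>z\<in>{-K..K}. heat_kernel r m z)"
    by (rule heat_kernel_sum_eq_1[symmetric]) (simp add: K_def)
  also have "\<dots> = heat_mass r m L + (\<Sum>z\<in>{-K..K} - {-L..L}. heat_kernel r m z)"
    using window by (simp add: heat_mass_def sum.subset_diff[of "{-L..L}" "{-K..K}"])
  also have "(\<Sum>z\<in>{-K..K} - {-L..L}. heat_kernel r m z)
      \<le> (\<Sum>z\<in>{-K..K} - {-L..L}. (of_int z)^2 * heat_kernel r m z / (of_int L + 1)^2)"
    by (rule sum_mono) (rule tail)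
  also have "\<dots> \<le> (\<Sum>z\<in>{-K..K}. (of_int z)^2 * heat_kernel r m z / (of_int L + 1)^2)"
    using nonneg by (intro sum_mono2) auto
  also have "\<dots> = 2 * r * real m / (of_int L + 1)^2"
    using heat_kernel_second_moment[of m K r] by (simp add: K_def sum_divide_distrib[symmetric])
  finally show ?thesis by simp
qed

locale lazy_walk =
  fixes r :: real
  assumes rate_nonneg: "0 \<le> r" and rate_le: "r \<le> 1/4"

context lazy_walk
begin

lemma heat_step_nonneg: "(\<And>x. f x \<ge> 0) \<Longrightarrow> heat_step r f x \<ge> 0"
  unfolding heat_step_convex using rate_nonneg rate_le by (simp add: add_nonneg_nonneg)

lemma heat_step_mono: "(\<And>x. f x \<le> g x) \<Longrightarrow> heat_step r f x \<le> heat_step r g x"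
  using heat_step_nonneg[of "\<lambda>x. g x - f x" x] by (simp add: heat_step_def algebra_simps)

lemma heat_step_le: "(\<And>x. f x \<le> c) \<Longrightarrow> heat_step r f x \<le> c"
  using heat_step_mono[of f "\<lambda>_. c" x] by (simp add: heat_step_def)

lemma heat_step_abs_le: "(\<And>x. \<bar>f x\<bar> \<le> c) \<Longrightarrow> \<bar>heat_step r f x\<bar> \<le> c"
  using heat_step_le[of f c x] heat_step_le[of "\<lambda>x. - f x" c x]
  by (simp add: abs_le_iff heat_step_def algebra_simps)

lemma heat_cdf_nonneg: "heat_cdf r m x \<ge> 0"
  by (induction m arbitrary: x) (auto simp: heat_cdf_Suc heaviside_def intro: heat_step_nonneg)

lemma heat_cdf_le_1: "heat_cdf r m x \<le> 1"
  by (induction m arbitrary: x) (auto simp: heat_cdf_Suc heaviside_def intro: heat_step_le)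

lemma heat_kernel_nonneg: "heat_kernel r m z \<ge> 0"
  by (induction m arbitrary: z) (auto simp: heat_kernel_0 heat_kernel_Suc intro: heat_step_nonneg)

lemma heat_kernel_le_1: "heat_kernel r m z \<le> 1"
  by (induction m arbitrary: z) (auto simp: heat_kernel_0 heat_kernel_Suc intro: heat_step_le)

lemma heat_cdf_affine_diff:
  assumes "\<sigma> \<in> {1, -1}"
  shows "\<bar>heat_cdf r m (\<sigma> * (x + 1) - y) - heat_cdf r m (\<sigma> * x - y)\<bar>
       = heat_kernel r m (\<sigma> * x - y + (if \<sigma> = 1 then 1 else 0))"
proof (cases "\<sigma> = 1")
  case True
  then show ?thesis using heat_kernel_nonneg[of m "x - y + 1"] by (simp add: heat_kernel_def algebra_simps)
next
  case False
  then have "\<sigma> * (x + 1) - y = (- x - y) - 1" "\<sigma> * x - y = - x - y"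
    "\<sigma> * x - y + (if \<sigma> = 1 then 1 else 0) = - x - y"
    using assms by auto
  then show ?thesis
    using heat_kernel_nonneg[of m "- x - y"] by (simp only:) (simp add: heat_kernel_def abs_minus_commute)
qed

lemma heat_energy_le_1: "heat_energy r m \<le> 1"
proof -
  have "heat_energy r m \<le> (\<Sum>z\<in>{-int m..int m}. heat_kernel r m z)"
    unfolding heat_energy_def using heat_kernel_nonneg heat_kernel_le_1
    by (intro sum_mono) (simp add: power2_eq_square mult_left_le)
  then show ?thesis using heat_kernel_sum_eq_1[of m "int m" r] by simp
qed

lemma heat_step_energy_decay:
  fixes p :: "int \<Rightarrow> real"
  assumes vanish: "\<And>z. K - 1 \<le> \<bar>z\<bar> \<Longrightarrow> p z = 0"
  shows "(\<Sum>z\<in>{-K..K}. (heat_step r p z)^2) \<le> (\<Sum>z\<in>{-K..K}. (p z)^2) - r * (\<Sum>z\<in>{-K..K}. (p (z + 1) - p z)^2)"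
proof -
  let ?E = "\<Sum>z\<in>{-K..K}. (p (z + 1) - p z)^2"
  have "(heat_step r p z)^2 = (p z)^2 + 2 * r * (p z * (p (z + 1) + p (z - 1) - 2 * p z))
      + r^2 * (p (z + 1) + p (z - 1) - 2 * p z)^2" for z
    by (simp add: heat_step_def power2_eq_square algebra_simps)
  then have "(\<Sum>z\<in>{-K..K}. (heat_step r p z)^2) = (\<Sum>z\<in>{-K..K}. (p z)^2)
      + 2 * r * (\<Sum>z\<in>{-K..K}. p z * (p (z + 1) + p (z - 1) - 2 * p z))
      + r^2 * (\<Sum>z\<in>{-K..K}. (p (z + 1) + p (z - 1) - 2 * p z)^2)"
    by (simp add: sum.distrib sum_distrib_left)
  also have "\<dots> \<le> (\<Sum>z\<in>{-K..K}. (p z)^2) - 2 * r * ?E + r^2 * (4 * ?E)"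
    using sum_mul_laplacian[where K=K and p=p, OF vanish] sum_sq_laplacian_le[where K=K and p=p, OF vanish]
    by (simp add: mult_left_mono)
  also have "\<dots> \<le> (\<Sum>z\<in>{-K..K}. (p z)^2) - r * ?E"
  proof -
    have "4 * r^2 \<le> r"
      using mult_left_mono[OF rate_le rate_nonneg] by (simp add: power2_eq_square)
    then have "(4 * r^2) * ?E \<le> r * ?E" by (rule mult_right_mono) (simp add: sum_nonneg)
    then show ?thesis by (simp add: algebra_simps)
  qed
  finally show ?thesis .
qed

lemma heat_energy_Suc_le: "heat_energy r (Suc m) \<le> heat_energy r m - r * (heat_energy r m)^3 / 4"
proof -
  define K where "K = int m + 3"
  have vanish: "\<And>z. K - 1 \<le> \<bar>z\<bar> \<Longrightarrow> heat_kernel r m z = 0"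
    by (rule heat_kernel_eq_0) (simp add: K_def)
  have energy: "(\<Sum>z\<in>{-K..K}. (heat_kernel r m z)^2) = heat_energy r m"
    by (rule heat_energy_eq) (simp add: K_def)
  have mass: "(\<Sum>z\<in>{-K..K}. heat_kernel r m z) = 1"
    by (rule heat_kernel_sum_eq_1) (simp add: K_def)
  let ?D = "\<Sum>z\<in>{-K..K}. (heat_kernel r m (z + 1) - heat_kernel r m z)^2"
  have "(heat_energy r m)^3 / 4 \<le> ?D"
    using nash_inequality[OF vanish heat_kernel_nonneg mass] energy by simp
  then have "r * ((heat_energy r m)^3 / 4) \<le> r * ?D" using rate_nonneg by (rule mult_left_mono)
  moreover have "heat_energy r (Suc m) \<le> heat_energy r m - r * ?D"
    using heat_step_energy_decay[where p="heat_kernel r m" and K=K, OF vanish] heat_energy_eq[of "Suc m" K r] energy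
    by (simp add: heat_kernel_Suc K_def)
  ultimately show ?thesis by simp
qed

lemma heat_energy_le: "heat_energy r m \<le> 1 / sqrt (1 + r * m / 2)"
proof -
  have inv: "1 + r * m / 2 \<le> 1 / (heat_energy r m)^2"
  proof (induction m)
    case 0
    then show ?case by (simp add: heat_energy_0)
  next
    case (Suc m)
    have "1 / (heat_energy r m)^2 + r / 2 \<le> 1 / (heat_energy r (Suc m))^2"
      using rate_nonneg rate_le
      by (intro inverse_square_gain heat_energy_pos heat_energy_Suc_le heat_energy_le_1)
    moreover have "1 + r * real (Suc m) / 2 = 1 + r * m / 2 + r / 2"
      by (simp add: distrib_left add_divide_distrib)
    ultimately show ?case using Suc.IH by linarith
  qed
  have pos: "(heat_energy r m)^2 > 0" "1 + r * m / 2 > 0"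
    using heat_energy_pos[of r m] rate_nonneg by (auto intro: add_pos_nonneg)
  then have "(heat_energy r m)^2 \<le> 1 / (1 + r * m / 2)"
    using inv by (simp add: le_divide_eq mult.commute)
  then have "sqrt ((heat_energy r m)^2) \<le> sqrt (1 / (1 + r * m / 2))"
    by (rule real_sqrt_le_mono)
  then show ?thesis using heat_energy_pos[of r m] by (simp add: real_sqrt_divide)
qed

lemma sum_heat_energy_le: "r * (\<Sum>m<n. heat_energy r m) \<le> 6 * sqrt (1 + r * n / 2)"
proof -
  let ?g = "\<lambda>m::nat. 6 * sqrt (1 + r * real m / 2)"
  have "r * heat_energy r m \<le> ?g (Suc m) - ?g m" for m
  proof -
    have "r * heat_energy r m \<le> r / sqrt (1 + r * m / 2)"
      using mult_left_mono[OF heat_energy_le rate_nonneg] by simp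
    also have "\<dots> \<le> 6 * (sqrt (1 + r * m / 2 + r / 2) - sqrt (1 + r * m / 2))"
      using rate_nonneg rate_le by (intro div_sqrt_le_sqrt_increment) auto
    finally show ?thesis by (simp add: algebra_simps add_divide_distrib)
  qed
  then have "(\<Sum>m<n. r * heat_energy r m) \<le> (\<Sum>m<n. ?g (Suc m) - ?g m)"
    by (rule sum_mono)
  also have "\<dots> = ?g n - ?g 0" by (rule sum_lessThan_telescope)
  finally show ?thesis by (simp add: sum_distrib_left)
qed

lemma heat_kernel_shift_le:
  assumes "0 \<le> z"
  shows "heat_kernel r m (z + 1) \<le> heat_kernel r m z"
  using assms
proof (induction m arbitrary: z)
  case 0
  then show ?case by (simp add: heat_kernel_0)
next
  case (Suc m)
  let ?p = "heat_kernel r m"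
  have d1: "?p (z + 1) \<le> ?p z" and d2: "?p (z + 2) \<le> ?p (z + 1)"
    using Suc.IH[of z] Suc.IH[of "z + 1"] Suc.prems by (simp_all add: add.assoc)
  have r: "0 \<le> r" "r \<le> 1/4" using rate_nonneg rate_le by simp_all
  show ?case
  proof (cases "z = 0")
    case True
    \<comment> \<open>at the centre the left neighbour is the mirror image of the right one\<close>
    have "?p (-1) = ?p 1" using heat_kernel_symmetric[of r m 1] by simp
    then have "heat_kernel r (Suc m) z - heat_kernel r (Suc m) (z + 1)
        = (1 - 3 * r) * (?p z - ?p (z + 1)) + r * (?p (z + 1) - ?p (z + 2))"
      using True by (simp add: heat_kernel_Suc heat_step_def algebra_simps)
    moreover have "(1 - 3 * r) * (?p z - ?p (z + 1)) \<ge> 0" using d1 r by simp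
    moreover have "r * (?p (z + 1) - ?p (z + 2)) \<ge> 0" using d2 r by simp
    ultimately show ?thesis by simp
  next
    case False
    then have d3: "?p z \<le> ?p (z - 1)" using Suc.IH[of "z - 1"] Suc.prems by simp
    have "heat_kernel r (Suc m) z - heat_kernel r (Suc m) (z + 1)
        = (1 - 2 * r) * (?p z - ?p (z + 1)) + r * (?p (z + 1) - ?p (z + 2)) + r * (?p (z - 1) - ?p z)"
      by (simp add: heat_kernel_Suc heat_step_def algebra_simps)
    moreover have "(1 - 2 * r) * (?p z - ?p (z + 1)) \<ge> 0" using d1 r by simp
    moreover have "r * (?p (z + 1) - ?p (z + 2)) \<ge> 0" using d2 r by simp
    moreover have "r * (?p (z - 1) - ?p z) \<ge> 0" using d3 r by simp
    ultimately show ?thesis by simp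
  qed
qed

lemma heat_kernel_antimono:
  assumes "0 \<le> a" "a \<le> b"
  shows "heat_kernel r m b \<le> heat_kernel r m a"
  using assms
proof (induction "nat (b - a)" arbitrary: b)
  case (Suc k)
  then have "heat_kernel r m b \<le> heat_kernel r m (b - 1)" using heat_kernel_shift_le[of "b - 1" m] by simp
  also have "\<dots> \<le> heat_kernel r m a" using Suc by (intro Suc.hyps(1)) auto
  finally show ?case .
qed simp

lemma heat_mass_ratio:
  assumes "0 \<le> K" "K \<le> L"
  shows "(2 * of_int K + 1) * heat_mass r m L \<le> (2 * of_int L + 1) * heat_mass r m K"
  using assms(2)
proof (induction "nat (L - K)" arbitrary: L)
  case 0
  then show ?case by simp
next
  case (Suc k)
  define L' where "L' = L - 1"
  have L': "K \<le> L'" "L = L' + 1" using Suc by (auto simp: L'_def)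
  \<comment> \<open>unimodality: every point of the window [-K, K] carries at least the mass at L' + 1\<close>
  have "(\<Sum>z\<in>{-K..K}. heat_kernel r m (L' + 1)) \<le> heat_mass r m K"
    unfolding heat_mass_def
  proof (rule sum_mono)
    fix z assume "z \<in> {-K..K}"
    then have "\<bar>z\<bar> \<le> L' + 1" using L' by auto
    then show "heat_kernel r m (L' + 1) \<le> heat_kernel r m z"
      using heat_kernel_antimono[of "\<bar>z\<bar>" "L' + 1" m] heat_kernel_abs[of r m z] by simp
  qed
  then have lb: "(2 * of_int K + 1) * heat_kernel r m (L' + 1) \<le> heat_mass r m K"
    using assms(1) by (simp add: of_nat_nat)
  have "(2 * of_int K + 1) * heat_mass r m L
      = (2 * of_int K + 1) * heat_mass r m L' + 2 * ((2 * of_int K + 1) * heat_kernel r m (L' + 1))"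
    using heat_mass_Suc_radius[of L' r m] L' assms(1) by (simp add: algebra_simps)
  also have "\<dots> \<le> (2 * of_int L' + 1) * heat_mass r m K + 2 * heat_mass r m K"
  proof -
    have "(2 * of_int K + 1) * heat_mass r m L' \<le> (2 * of_int L' + 1) * heat_mass r m K"
      using Suc.hyps(1)[of L'] Suc.hyps(2) L' by simp
    then show ?thesis using lb by linarith
  qed
  also have "\<dots> = (2 * of_int L + 1) * heat_mass r m K" using L' by (simp add: algebra_simps)
  finally show ?case .
qed

lemma heat_mass_lower_bound:
  assumes "0 \<le> K" "K \<le> L"
  shows "(2 * of_int K + 1) / (2 * of_int L + 1) * (1 - 2 * r * real m / (of_int L + 1)^2)
      \<le> heat_mass r m K"
proof -
  have "(2 * of_int K + 1) * (1 - 2 * r * real m / (of_int L + 1)^2) \<le> (2 * of_int K + 1) * heat_mass r m L"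
    using assms heat_mass_chebyshev[of L r m] heat_kernel_nonneg by (intro mult_left_mono) auto
  also have "\<dots> \<le> (2 * of_int L + 1) * heat_mass r m K" by (rule heat_mass_ratio[OF assms])
  finally show ?thesis using assms by (simp add: pos_divide_le_eq ac_simps)
qed

lemma heat_cdf_sum_bounds:
  "real N \<le> (\<Sum>i\<in>{-int N..int N}. heat_cdf r m i)"
  "(\<Sum>i\<in>{-int N..int N}. heat_cdf r m i) \<le> real N + 1"
proof -
  define X where "X = (\<Sum>x\<in>{-int N..int N - 1}. heat_cdf r m x)"
  have "{-int N..int N} = insert (int N) {-int N..int N - 1}" by auto
  then have split: "(\<Sum>i\<in>{-int N..int N}. heat_cdf r m i) = heat_cdf r m (int N) + X"
    by (simp add: X_def)
  have "(\<Sum>x\<in>{-int N..int N - 1}. heat_cdf r m (- x - 1)) = X"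
    unfolding X_def by (rule sum.reindex_bij_witness[of _ "\<lambda>x. - x - 1" "\<lambda>x. - x - 1"]) auto
  then have "X + X = (\<Sum>x\<in>{-int N..int N - 1}. heat_cdf r m x + heat_cdf r m (- x - 1))"
    by (simp add: X_def sum.distrib)
  also have "\<dots> = 2 * real N" by (simp add: heat_cdf_symmetric)
  finally have "X = real N" by simp
  then show "real N \<le> (\<Sum>i\<in>{-int N..int N}. heat_cdf r m i)"
    and "(\<Sum>i\<in>{-int N..int N}. heat_cdf r m i) \<le> real N + 1"
    using split heat_cdf_nonneg[of m "int N"] heat_cdf_le_1[of m "int N"] by simp_all
qed

lemma heat_cdf_shifted_sum_le:
  assumes "0 \<le> K" "int y + K \<le> int N + 1" "K \<le> int N"
  shows "(\<Sum>i\<in>{-int N..int N}. heat_cdf r m (i - int y)) \<le> real N + 1 - real y * heat_mass r m K"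
proof -
  have shift: "heat_cdf r m x - heat_cdf r m (x - int y) = (\<Sum>j<y. heat_kernel r m (x - int j))" for x
    by (induction y) (simp_all add: heat_kernel_def algebra_simps)
  have "heat_mass r m K \<le> (\<Sum>i\<in>{-int N..int N}. heat_kernel r m (i - int j))" if "j < y" for j
  proof -
    have "heat_mass r m K = (\<Sum>i\<in>{int j - K..int j + K}. heat_kernel r m (i - int j))"
      unfolding heat_mass_def by (rule sum.reindex_bij_witness[of _ "\<lambda>i. i - int j" "\<lambda>z. z + int j"]) auto
    also have "\<dots> \<le> (\<Sum>i\<in>{-int N..int N}. heat_kernel r m (i - int j))"
      using that assms by (intro sum_mono2) (auto simp: heat_kernel_nonneg)
    finally show ?thesis .
  qed
  then have "real y * heat_mass r m K \<le> (\<Sum>j<y. \<Sum>i\<in>{-int N..int N}. heat_kernel r m (i - int j))"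
    using sum_mono[of "{..<y}" "\<lambda>_. heat_mass r m K"] by simp
  also have "\<dots> = (\<Sum>i\<in>{-int N..int N}. \<Sum>j<y. heat_kernel r m (i - int j))"
    by (rule sum.swap)
  also have "\<dots> = (\<Sum>i\<in>{-int N..int N}. heat_cdf r m i) - (\<Sum>i\<in>{-int N..int N}. heat_cdf r m (i - int y))"
    by (simp add: shift[symmetric] sum_subtractf)
  finally show ?thesis using heat_cdf_sum_bounds(2)[where N=N and m=m] by simp
qed

lemma heat_iter_ramp_diff:
  assumes "\<sigma> \<in> {1, -1}" "L > 0"
  shows "\<bar>(heat_step r ^^ m) (ramp L \<sigma>) (x + 1) - (heat_step r ^^ m) (ramp L \<sigma>) x\<bar> \<le> 1 / L"
proof (induction m arbitrary: x)
  case 0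
  have "\<bar>max 0 (real_of_int (\<sigma> * (x + 1))) - max 0 (real_of_int (\<sigma> * x))\<bar> \<le> 1"
    using assms(1) by (auto simp: algebra_simps)
  then show ?case using assms(2) by (simp add: ramp_def diff_divide_distrib[symmetric] divide_right_mono)
next
  case (Suc m)
  then show ?case by (simp add: heat_step_diff heat_step_abs_le)
qed

lemma heat_iter_ramp_le:
  assumes "\<sigma> \<in> {1, -1}" "L > 0"
  shows "(heat_step r ^^ m) (ramp L \<sigma>) x \<le> ((of_int x)^2 + L^2) / (2 * L^2) + real m * r / L^2"
proof (induction m arbitrary: x)
  case 0
  have "2 * L * max 0 (real_of_int (\<sigma> * x)) \<le> 2 * L * \<bar>of_int x\<bar>"
    using assms by (intro mult_left_mono) auto
  also have "\<dots> \<le> (of_int x)^2 + L^2"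
    using sum_squares_ge_zero[of "\<bar>of_int x\<bar> - L" 0] by (simp add: power2_eq_square algebra_simps)
  finally show ?case using assms(2) by (simp add: ramp_def field_simps power2_eq_square)
next
  case (Suc m)
  define w where "w x = ((of_int x)^2 + L^2) / (2 * L^2) + real m * r / L^2" for x :: int
  have "(heat_step r ^^ Suc m) (ramp L \<sigma>) x \<le> heat_step r w x"
    using Suc.IH by (simp add: heat_step_mono w_def)
  also have "heat_step r w x = w x + r / L^2"
    using assms(2) by (simp add: heat_step_def w_def power2_eq_square field_simps)
  finally show ?case by (simp add: w_def algebra_simps add_divide_distrib)
qed

end

section \<open>The labelled exclusion process\<close>

definition step_prob :: "nat \<Rightarrow> real" where
  "step_prob N = 1 / (2 * (2 * real N + 1))"

lemma lazy_walk_step_prob: "1 \<le> N \<Longrightarrow> lazy_walk (step_prob N)"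
  by unfold_locales (simp_all add: step_prob_def field_simps)

definition linear_stat :: "nat \<Rightarrow> (int \<Rightarrow> real) \<Rightarrow> sstate \<Rightarrow> real" where
  "linear_stat N h s = (\<Sum>i\<in>labels N. h (fst s i))"

text \<open>quad_var N h s bounds the conditional second moment of the one-step increment of
  linear_stat N h from s.\<close>

definition quad_var :: "nat \<Rightarrow> (int \<Rightarrow> real) \<Rightarrow> sstate \<Rightarrow> real" where
  "quad_var N h s = step_prob N * (\<Sum>i\<in>labels N. (h (fst s i + 1) - h (fst s i))^2 + (h (fst s i - 1) - h (fst s i))^2)"

text \<open>The invariant expresses J_(-1,0) as the number of particles on [0, oo) minus its initial
  value N + 1, which makes the current a linear statistic of the positions.\<close>

definition ssep_invariant :: "nat \<Rightarrow> sstate \<Rightarrow> bool" where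
  "ssep_invariant N s \<longleftrightarrow> (\<forall>i\<in>labels N. \<forall>j\<in>labels N. i < j \<longrightarrow> fst s i < fst s j)
      \<and> real_of_int (snd s) = linear_stat N heaviside s - (real N + 1)"

lemma finite_labels [simp]: "finite (labels N)"
  by (simp add: labels_def)

lemma labels_nonempty [simp]: "labels N \<noteq> {}"
  by (simp add: labels_def)

lemma card_labels: "card (labels N) = 2 * N + 1"
  by (simp add: labels_def)

lemma linear_stat_init: "linear_stat N h init_state = (\<Sum>i\<in>{-int N..int N}. h i)"
  by (simp add: linear_stat_def init_state_def labels_def)

lemma linear_stat_try_jump:
  assumes "i \<in> labels N"
  shows "linear_stat N h (try_jump N s i d) = linear_stat N h s
     + (if fst s i + d \<in> fst s ` labels N then 0 else h (fst s i + d) - h (fst s i))"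
  using sum_fun_upd[OF finite_labels assms, of h "fst s" "fst s i + d"]
  by (auto simp: try_jump_def Let_def linear_stat_def occupied_def)

lemma ssep_invariant_try_jump:
  assumes inv: "ssep_invariant N s" and i: "i \<in> labels N" and d: "d \<in> {-1, 1}"
  shows "ssep_invariant N (try_jump N s i d)"
proof (cases "fst s i + d \<in> occupied N s")
  case True
  then show ?thesis using inv by (simp add: try_jump_def Let_def)
next
  case False
  let ?p = "fst s i"
  let ?pos = "(fst s)(i := ?p + d)"
  have free: "fst s k \<noteq> ?p + d" if "k \<in> labels N" for k
    using False that unfolding occupied_def by (metis image_eqI)
  have ord: "fst s j < fst s k" if "j \<in> labels N" "k \<in> labels N" "j < k" for j k
    using inv that by (simp add: ssep_invariant_def)
  \<comment> \<open>the moving particle cannot pass a neighbour since it only moves to a free adjacent site\<close>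
  have "?pos j < ?pos k" if "j \<in> labels N" "k \<in> labels N" "j < k" for j k
    using ord[OF that] ord[of j i] ord[of i k] free[of j] free[of k] that i d by auto
  moreover have "heaviside (?p + d) - heaviside ?p
      = (if ?p = -1 \<and> d = 1 then 1 else if ?p = 0 \<and> d = -1 then -1 else 0)"
    using d by (auto simp: heaviside_def)
  ultimately show ?thesis
    using inv False linear_stat_try_jump[OF i, where h=heaviside and s=s and d=d]
    by (auto simp: ssep_invariant_def try_jump_def Let_def occupied_def)
qed

lemma ssep_invariant_init: "ssep_invariant N init_state"
proof -
  have "{-int N..int N} \<inter> {i. 0 \<le> i} = {0..int N}" by auto
  then have "(\<Sum>i\<in>{-int N..int N}. heaviside i) = real N + 1"
    by (simp add: heaviside_def sum.If_cases)
  then show ?thesis by (simp add: ssep_invariant_def linear_stat_init, simp add: init_state_def)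
qed

lemma set_pmf_kernel: "set_pmf (kernel N s) = {try_jump N s i d | i d. i \<in> labels N \<and> d \<in> {-1, 1}}"
  unfolding kernel_def by (auto simp: set_bind_pmf)

lemma iter_law_Suc: "iter_law N (Suc n) = iter_law N n \<bind> kernel N"
  by (simp add: iter_law_def)

lemma ssep_invariant_iter_law: "s \<in> set_pmf (iter_law N n) \<Longrightarrow> ssep_invariant N s"
proof (induction n arbitrary: s)
  case 0
  then show ?case by (simp add: iter_law_def ssep_invariant_init)
next
  case (Suc n)
  then obtain s0 where s0: "s0 \<in> set_pmf (iter_law N n)" and s: "s \<in> set_pmf (kernel N s0)"
    by (auto simp: iter_law_Suc set_bind_pmf)
  from s0 have "ssep_invariant N s0" by (rule Suc.IH)
  then show ?case using s by (auto simp: set_pmf_kernel intro: ssep_invariant_try_jump)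
qed

lemma ssep_invariant_ordered:
  "ssep_invariant N s \<Longrightarrow> i \<in> labels N \<Longrightarrow> j \<in> labels N \<Longrightarrow> i \<le> j \<Longrightarrow> fst s i \<le> fst s j"
  unfolding ssep_invariant_def by (cases "i = j") (auto simp: less_le)

lemma ssep_invariant_current_bound:
  assumes "ssep_invariant N s"
  shows "\<bar>real_of_int (snd s)\<bar> \<le> real N + 1"
proof -
  have "linear_stat N heaviside s \<le> real (card (labels N))"
    unfolding linear_stat_def
    using sum_bounded_above[where A="labels N" and f="\<lambda>i. heaviside (fst s i)" and K=1]
    by (simp add: heaviside_def)
  moreover have "0 \<le> linear_stat N heaviside s"
    unfolding linear_stat_def by (simp add: sum_nonneg heaviside_def)
  ultimately show ?thesis using assms by (simp add: ssep_invariant_def card_labels)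
qed

lemma linear_stat_ge_tagged_side:
  assumes inv: "ssep_invariant N s" and \<sigma>: "\<sigma> \<in> {1, -1}" and nonneg: "\<And>x. 0 \<le> h x"
    and above: "\<And>x. \<sigma> * fst s 0 \<le> \<sigma> * x \<Longrightarrow> c \<le> h x"
  shows "(real N + 1) * c \<le> linear_stat N h s"
proof -
  define S where "S = {i\<in>labels N. 0 \<le> \<sigma> * i}"
  have "S = {0..int N} \<or> S = {-int N..0}" using \<sigma> by (auto simp: S_def labels_def)
  then have card: "card S = N + 1" by auto
  have "c \<le> h (fst s i)" if "i \<in> S" for i
  proof (rule above)
    have "0 \<in> labels N" by (simp add: labels_def)
    then show "\<sigma> * fst s 0 \<le> \<sigma> * fst s i"
      using \<sigma> that ssep_invariant_ordered[OF inv, of 0 i] ssep_invariant_ordered[OF inv, of i 0]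
      by (auto simp: S_def)
  qed
  then have "real (card S) * c \<le> (\<Sum>i\<in>S. h (fst s i))" by (rule sum_bounded_below)
  also have "\<dots> \<le> linear_stat N h s"
    unfolding linear_stat_def using nonneg by (intro sum_mono2) (auto simp: S_def)
  finally show ?thesis by (simp add: card algebra_simps)
qed

section \<open>Exponential moments of linear statistics\<close>

lemma nn_integral_kernel:
  assumes f: "\<And>s. f s \<ge> 0"
  shows "(\<integral>\<^sup>+s'. ennreal (f s') \<partial>kernel N s)
     = ennreal (step_prob N * (\<Sum>i\<in>labels N. f (try_jump N s i (-1)) + f (try_jump N s i 1)))"
proof -
  have half: "ennreal x / 2 = ennreal (x / 2)" if "x \<ge> 0" for x
    using that by (metis divide_ennreal ennreal_numeral zero_less_numeral)
  have d: "(\<integral>\<^sup>+d. ennreal (f (try_jump N s i d)) \<partial>pmf_of_set {-1, 1::int})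
      = ennreal ((f (try_jump N s i (-1)) + f (try_jump N s i 1)) / 2)" for i
    by (subst nn_integral_pmf_of_set) (auto simp: f half ennreal_plus[symmetric] simp del: ennreal_plus)
  have "(\<integral>\<^sup>+s'. ennreal (f s') \<partial>kernel N s)
     = (\<integral>\<^sup>+i. ennreal ((f (try_jump N s i (-1)) + f (try_jump N s i 1)) / 2) \<partial>pmf_of_set (labels N))"
    unfolding kernel_def by (simp add: d f)
  also have "\<dots> = ennreal ((\<Sum>i\<in>labels N. (f (try_jump N s i (-1)) + f (try_jump N s i 1)) / 2)
      / real (card (labels N)))"
    by (subst nn_integral_pmf_of_set) (auto simp: f sum_nonneg add_nonneg_nonneg divide_ennreal card_labels
       ennreal_of_nat_eq_real_of_nat simp del: of_nat_add of_nat_Suc)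
  also have "(\<Sum>i\<in>labels N. (f (try_jump N s i (-1)) + f (try_jump N s i 1)) / 2) / real (card (labels N))
     = step_prob N * (\<Sum>i\<in>labels N. f (try_jump N s i (-1)) + f (try_jump N s i 1))"
    by (simp add: card_labels step_prob_def sum_divide_distrib[symmetric])
  finally show ?thesis .
qed

lemma linear_stat_drift:
  assumes "ssep_invariant N s"
  shows "(\<Sum>i\<in>labels N. (linear_stat N h (try_jump N s i 1) - linear_stat N h s)
                      + (linear_stat N h (try_jump N s i (-1)) - linear_stat N h s))
       = (\<Sum>i\<in>labels N. h (fst s i + 1) + h (fst s i - 1) - 2 * h (fst s i))"
proof -
  let ?X = "fst s ` labels N"
  have "inj_on (fst s) (labels N)"
    using assms unfolding ssep_invariant_def inj_on_def by (metis less_irrefl linorder_neqE)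
  then have reindex: "(\<Sum>i\<in>labels N. g (fst s i)) = (\<Sum>x\<in>?X. g x)" for g :: "int \<Rightarrow> real"
    by (simp add: sum.reindex)
  have "linear_stat N h (try_jump N s i 1) - linear_stat N h s
      + (linear_stat N h (try_jump N s i (-1)) - linear_stat N h s)
      = (if fst s i + 1 \<in> ?X then 0 else h (fst s i + 1) - h (fst s i))
      + (if fst s i - 1 \<in> ?X then 0 else h (fst s i - 1) - h (fst s i))" if "i \<in> labels N" for i
    using linear_stat_try_jump[OF that, where h=h and s=s and d=1]
      linear_stat_try_jump[OF that, where h=h and s=s and d="-1"] by simp
  then show ?thesis
    using reindex[of "\<lambda>x. (if x + 1 \<in> ?X then 0 else h (x + 1) - h x) + (if x - 1 \<in> ?X then 0 else h (x - 1) - h x)"]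
      reindex[of "\<lambda>x. h (x + 1) + h (x - 1) - 2 * h x"] sum_blocked_jumps[of ?X h]
    by (simp cong: sum.cong)
qed

lemma exp_linear_stat_kernel_le:
  assumes inv: "ssep_invariant N s" and grad: "\<And>x. \<bar>h (x + 1) - h x\<bar> \<le> G"
  shows "(\<integral>\<^sup>+s'. ennreal (exp (\<theta> * linear_stat N h s')) \<partial>kernel N s)
     \<le> ennreal (exp (\<theta> * linear_stat N (heat_step (step_prob N) h) s + \<theta>^2 * exp (\<bar>\<theta>\<bar> * G) / 2 * quad_var N h s))"
proof -
  define r where "r = step_prob N"
  define Z where "Z = linear_stat N h s"
  define c where "c = \<theta>^2 * exp (\<bar>\<theta>\<bar> * G) / 2"
  define g where "g i d = h (fst s i + d) - h (fst s i)" for i d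
  have jump: "exp (\<theta> * linear_stat N h (try_jump N s i d))
      \<le> exp (\<theta> * Z) * (1 + \<theta> * (linear_stat N h (try_jump N s i d) - Z) + c * (g i d)^2)"
    if "i \<in> labels N" "d \<in> {-1, 1}" for i d
  proof -
    have "\<bar>g i d\<bar> \<le> G" using that grad grad[of "fst s i - 1"] by (auto simp: g_def abs_minus_commute)
    then show ?thesis
      using exp_shift_le[of _ "g i d" G \<theta> Z] linear_stat_try_jump[OF that(1), where h=h and s=s and d=d]
      by (auto simp: Z_def c_def g_def)
  qed
  have "r * (\<Sum>i\<in>labels N. exp (\<theta> * linear_stat N h (try_jump N s i (-1))) + exp (\<theta> * linear_stat N h (try_jump N s i 1)))
     \<le> r * (\<Sum>i\<in>labels N. exp (\<theta> * Z) * (1 + \<theta> * (linear_stat N h (try_jump N s i (-1)) - Z) + c * (g i (-1))^2)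
                          + exp (\<theta> * Z) * (1 + \<theta> * (linear_stat N h (try_jump N s i 1) - Z) + c * (g i 1)^2))"
    by (intro mult_left_mono sum_mono add_mono jump) (auto simp: r_def step_prob_def)
  also have "\<dots> = exp (\<theta> * Z) * (r * (2 * real (card (labels N)))
      + \<theta> * (r * (\<Sum>i\<in>labels N. (linear_stat N h (try_jump N s i 1) - Z) + (linear_stat N h (try_jump N s i (-1)) - Z)))
      + c * (r * (\<Sum>i\<in>labels N. (g i 1)^2 + (g i (-1))^2)))"
    by (simp add: sum.distrib sum_subtractf sum_distrib_left algebra_simps)
  also have "\<dots> = exp (\<theta> * Z) * (1 + \<theta> * (linear_stat N (heat_step r h) s - Z) + c * quad_var N h s)"
  proof -
    have "r * (2 * real (card (labels N))) = 1" by (simp add: r_def step_prob_def card_labels)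
    moreover have "linear_stat N (heat_step r h) s
        = Z + r * (\<Sum>i\<in>labels N. h (fst s i + 1) + h (fst s i - 1) - 2 * h (fst s i))"
      by (simp add: linear_stat_def heat_step_def Z_def sum.distrib sum_distrib_left)
    moreover have "r * (\<Sum>i\<in>labels N. (g i 1)^2 + (g i (-1))^2) = quad_var N h s"
      by (simp add: quad_var_def g_def r_def)
    ultimately show ?thesis using linear_stat_drift[OF inv, of h] by (simp add: Z_def)
  qed
  also have "\<dots> \<le> exp (\<theta> * Z) * exp (\<theta> * (linear_stat N (heat_step r h) s - Z) + c * quad_var N h s)"
    by (intro mult_left_mono) (simp_all add: add.assoc)
  also have "\<dots> = exp (\<theta> * linear_stat N (heat_step r h) s + c * quad_var N h s)"
    by (simp add: exp_add[symmetric] algebra_simps)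
  finally show ?thesis
    by (simp add: nn_integral_kernel r_def c_def Z_def)
qed

lemma exp_linear_stat_iter_le:
  assumes backward: "\<And>k. k < n \<Longrightarrow> h k = heat_step (step_prob N) (h (Suc k))"
    and qv: "\<And>k s. k < n \<Longrightarrow> ssep_invariant N s \<Longrightarrow> quad_var N (h (Suc k)) s \<le> W k"
    and grad: "\<And>k x. k < n \<Longrightarrow> \<bar>h (Suc k) (x + 1) - h (Suc k) x\<bar> \<le> G"
  shows "(\<integral>\<^sup>+s. ennreal (exp (\<theta> * linear_stat N (h n) s)) \<partial>iter_law N n)
     \<le> ennreal (exp (\<theta> * linear_stat N (h 0) init_state + \<theta>^2 * exp (\<bar>\<theta>\<bar> * G) / 2 * (\<Sum>k<n. W k)))"
proof -
  define c where "c = \<theta>^2 * exp (\<bar>\<theta>\<bar> * G) / 2"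
  have "c \<ge> 0" by (simp add: c_def)
  have "(\<integral>\<^sup>+s. ennreal (exp (\<theta> * linear_stat N (h k) s)) \<partial>iter_law N k)
      \<le> ennreal (exp (\<theta> * linear_stat N (h 0) init_state + c * (\<Sum>j<k. W j)))" if "k \<le> n" for k
    using that
  proof (induction k)
    case 0
    then show ?case by (simp add: iter_law_def)
  next
    case (Suc k)
    have step: "(\<integral>\<^sup>+s'. ennreal (exp (\<theta> * linear_stat N (h (Suc k)) s')) \<partial>kernel N s)
        \<le> ennreal (exp (\<theta> * linear_stat N (h k) s)) * ennreal (exp (c * W k))"
      if "s \<in> set_pmf (iter_law N k)" for s
    proof -
      have inv: "ssep_invariant N s" using that by (rule ssep_invariant_iter_law)
      have "\<bar>h (Suc k) (x + 1) - h (Suc k) x\<bar> \<le> G" for x using grad Suc.prems by simp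
      moreover have "heat_step (step_prob N) (h (Suc k)) = h k" using backward[of k] Suc.prems by simp
      ultimately have "(\<integral>\<^sup>+s'. ennreal (exp (\<theta> * linear_stat N (h (Suc k)) s')) \<partial>kernel N s)
          \<le> ennreal (exp (\<theta> * linear_stat N (h k) s + c * quad_var N (h (Suc k)) s))"
        unfolding c_def using exp_linear_stat_kernel_le[OF inv] by metis
      also have "\<dots> \<le> ennreal (exp (\<theta> * linear_stat N (h k) s + c * W k))"
        using qv[OF _ inv, of k] Suc.prems \<open>c \<ge> 0\<close> by (auto intro!: ennreal_leI mult_left_mono)
      finally show ?thesis by (simp add: exp_add ennreal_mult)
    qed
    have "(\<integral>\<^sup>+s. ennreal (exp (\<theta> * linear_stat N (h (Suc k)) s)) \<partial>iter_law N (Suc k))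
        = (\<integral>\<^sup>+s. (\<integral>\<^sup>+s'. ennreal (exp (\<theta> * linear_stat N (h (Suc k)) s')) \<partial>kernel N s) \<partial>iter_law N k)"
      by (simp add: iter_law_Suc)
    also have "\<dots> \<le> (\<integral>\<^sup>+s. ennreal (exp (\<theta> * linear_stat N (h k) s)) * ennreal (exp (c * W k)) \<partial>iter_law N k)"
      by (rule nn_integral_mono_AE) (simp add: AE_measure_pmf_iff step)
    also have "\<dots> = (\<integral>\<^sup>+s. ennreal (exp (\<theta> * linear_stat N (h k) s)) \<partial>iter_law N k) * ennreal (exp (c * W k))"
      by (rule nn_integral_multc) simp
    also have "\<dots> \<le> ennreal (exp (\<theta> * linear_stat N (h 0) init_state + c * (\<Sum>j<k. W j))) * ennreal (exp (c * W k))"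
      using Suc by (auto intro: mult_right_mono)
    also have "\<dots> = ennreal (exp (\<theta> * linear_stat N (h 0) init_state + c * (\<Sum>j<Suc k. W j)))"
      by (simp add: ennreal_mult[symmetric] exp_add[symmetric] algebra_simps)
    finally show ?case .
  qed
  then show ?thesis by (simp add: c_def)
qed

lemma quad_var_le_sq:
  assumes "\<And>x. \<bar>h (x + 1) - h x\<bar> \<le> G"
  shows "quad_var N h s \<le> G^2"
proof -
  have sq: "(h (x + 1) - h x)^2 \<le> G^2" for x
    using assms[of x] by (metis abs_ge_zero order_trans power2_abs power_mono)
  have "(h (fst s i + 1) - h (fst s i))^2 + (h (fst s i - 1) - h (fst s i))^2 \<le> 2 * G^2" for i
    using add_mono[OF sq[of "fst s i"] sq[of "fst s i - 1"]] by (simp add: power2_commute)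
  then have "quad_var N h s \<le> step_prob N * (real (card (labels N)) * (2 * G^2))"
    unfolding quad_var_def by (intro mult_left_mono sum_bounded_above) (auto simp: step_prob_def)
  also have "step_prob N * (real (card (labels N)) * (2 * G^2)) = G^2"
    by (simp add: step_prob_def card_labels field_simps)
  finally show ?thesis .
qed

lemma quad_var_le_support:
  assumes inv: "ssep_invariant N s" and "finite S" and flat: "\<And>x. x \<notin> S \<Longrightarrow> h (x + 1) = h x"
  shows "quad_var N h s \<le> 2 * step_prob N * (\<Sum>x\<in>S. (h (x + 1) - h x)^2)"
proof -
  define \<phi> where "\<phi> x = (h (x + 1) - h x)^2" for x
  have inj: "inj_on (\<lambda>i. fst s i + c) (labels N)" for c
    using inv unfolding ssep_invariant_def inj_on_def by (metis add_right_cancel less_irrefl linorder_neqE)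
  have le: "(\<Sum>i\<in>labels N. \<phi> (fst s i + c)) \<le> (\<Sum>x\<in>S. \<phi> x)" for c
  proof -
    have "(\<Sum>i\<in>labels N. \<phi> (fst s i + c)) = (\<Sum>x\<in>(\<lambda>i. fst s i + c) ` labels N. \<phi> x)"
      using inj[of c] by (simp add: sum.reindex)
    also have "\<dots> = (\<Sum>x\<in>(\<lambda>i. fst s i + c) ` labels N \<inter> S. \<phi> x)"
      using \<open>finite S\<close> flat by (intro sum.mono_neutral_right) (auto simp: \<phi>_def)
    also have "\<dots> \<le> (\<Sum>x\<in>S. \<phi> x)" using \<open>finite S\<close> by (intro sum_mono2) (auto simp: \<phi>_def)
    finally show ?thesis .
  qed
  have "quad_var N h s = step_prob N * ((\<Sum>i\<in>labels N. \<phi> (fst s i + 0)) + (\<Sum>i\<in>labels N. \<phi> (fst s i + -1)))"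
    by (simp add: quad_var_def \<phi>_def sum.distrib power2_commute)
  also have "\<dots> \<le> step_prob N * (2 * (\<Sum>x\<in>S. \<phi> x))"
    using le[of 0] le[of "-1"] by (intro mult_left_mono) (auto simp: step_prob_def)
  finally show ?thesis by (simp add: \<phi>_def)
qed

lemma quad_var_heat_cdf_le:
  assumes "lazy_walk (step_prob N)" "ssep_invariant N s" "\<sigma> \<in> {1, -1}"
  shows "quad_var N (\<lambda>x. heat_cdf (step_prob N) m (\<sigma> * x - y)) s \<le> 2 * step_prob N * heat_energy (step_prob N) m"
proof -
  interpret lazy_walk "step_prob N" by (rule assms(1))
  let ?r = "step_prob N"
  define \<phi> where "\<phi> x = \<sigma> * x - y + (if \<sigma> = 1 then 1 else 0)" for x
  define S where "S = \<phi> -` {-int m..int m}"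
  define \<psi> where "\<psi> z = \<sigma> * (z + y - (if \<sigma> = 1 then 1 else 0))" for z
  have "\<phi> (\<psi> z) = z" "\<psi> (\<phi> x) = x" for z x
    using assms(3) by (auto simp: \<phi>_def \<psi>_def)
  then have bij: "bij_betw \<phi> S {-int m..int m}"
    unfolding S_def by (intro bij_betw_byWitness[where f'=\<psi>]) auto
  have grad: "(heat_cdf ?r m (\<sigma> * (x + 1) - y) - heat_cdf ?r m (\<sigma> * x - y))^2 = (heat_kernel ?r m (\<phi> x))^2"
    for x using heat_cdf_affine_diff[OF assms(3), of m x y] by (metis \<phi>_def power2_abs)
  have "quad_var N (\<lambda>x. heat_cdf ?r m (\<sigma> * x - y)) s
      \<le> 2 * ?r * (\<Sum>x\<in>S. (heat_cdf ?r m (\<sigma> * (x + 1) - y) - heat_cdf ?r m (\<sigma> * x - y))^2)"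
  proof (rule quad_var_le_support[OF assms(2)])
    show "finite S" using bij bij_betw_finite by blast
    show "heat_cdf ?r m (\<sigma> * (x + 1) - y) = heat_cdf ?r m (\<sigma> * x - y)" if "x \<notin> S" for x
    proof -
      have "int m < \<bar>\<phi> x\<bar>" using that by (auto simp: S_def)
      then show ?thesis using grad[of x] heat_kernel_eq_0[of m "\<phi> x" ?r] by simp
    qed
  qed
  also have "(\<Sum>x\<in>S. (heat_cdf ?r m (\<sigma> * (x + 1) - y) - heat_cdf ?r m (\<sigma> * x - y))^2)
      = (\<Sum>z\<in>{-int m..int m}. (heat_kernel ?r m z)^2)"
    unfolding grad using sum.reindex_bij_betw[OF bij, of "\<lambda>z. (heat_kernel ?r m z)^2"] by simp
  finally show ?thesis by (simp add: heat_energy_def)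
qed

lemma exp_moment_heaviside_le:
  assumes "1 \<le> N" "\<sigma> \<in> {1, -1}"
  shows "(\<integral>\<^sup>+s. ennreal (exp (\<theta> * linear_stat N (\<lambda>x. heaviside (\<sigma> * x - y)) s)) \<partial>iter_law N n)
     \<le> ennreal (exp (\<theta> * (\<Sum>i\<in>{-int N..int N}. heat_cdf (step_prob N) n (\<sigma> * i - y))
                     + \<theta>^2 * exp \<bar>\<theta>\<bar> * (6 * sqrt (1 + step_prob N * n / 2))))"
proof -
  let ?r = "step_prob N"
  have walk: "lazy_walk ?r" using assms(1) by (rule lazy_walk_step_prob)
  interpret lazy_walk ?r by (rule walk)
  define h where "h k = (\<lambda>x. heat_cdf ?r (n - k) (\<sigma> * x - y))" for k
  have "(\<integral>\<^sup>+s. ennreal (exp (\<theta> * linear_stat N (h n) s)) \<partial>iter_law N n)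
      \<le> ennreal (exp (\<theta> * linear_stat N (h 0) init_state
           + \<theta>^2 * exp (\<bar>\<theta>\<bar> * 1) / 2 * (\<Sum>k<n. 2 * ?r * heat_energy ?r (n - Suc k))))"
  proof (rule exp_linear_stat_iter_le)
    show "h k = heat_step ?r (h (Suc k))" if "k < n" for k
    proof -
      have "n - k = Suc (n - Suc k)" using that by simp
      then show ?thesis by (simp add: h_def heat_cdf_Suc heat_step_reflect[OF assms(2)])
    qed
    show "quad_var N (h (Suc k)) s \<le> 2 * ?r * heat_energy ?r (n - Suc k)" if "ssep_invariant N s" for k s
      unfolding h_def by (rule quad_var_heat_cdf_le[OF walk that assms(2)])
    show "\<bar>h (Suc k) (x + 1) - h (Suc k) x\<bar> \<le> 1" for k x
      unfolding h_def heat_cdf_affine_diff[OF assms(2)] by (rule heat_kernel_le_1)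
  qed
  also have "(\<Sum>k<n. 2 * ?r * heat_energy ?r (n - Suc k)) = 2 * (?r * (\<Sum>k<n. heat_energy ?r k))"
    by (simp add: sum_distrib_left[symmetric] sum.nat_diff_reindex)
  also have "\<theta>^2 * exp (\<bar>\<theta>\<bar> * 1) / 2 * (2 * (?r * (\<Sum>k<n. heat_energy ?r k)))
      \<le> \<theta>^2 * exp \<bar>\<theta>\<bar> * (6 * sqrt (1 + ?r * n / 2))"
    using mult_left_mono[OF sum_heat_energy_le[of n], of "\<theta>^2 * exp \<bar>\<theta>\<bar>"] by (simp add: ac_simps)
  finally show ?thesis by (simp add: h_def linear_stat_init ennreal_leI)
qed

lemma exp_moment_ramp_le:
  assumes "1 \<le> N" "\<sigma> \<in> {1, -1}"
  shows "(\<integral>\<^sup>+s. ennreal (exp (\<theta> * linear_stat N (ramp (real N) \<sigma>) s)) \<partial>iter_law N n)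
     \<le> ennreal (exp (\<theta> * (\<Sum>i\<in>{-int N..int N}. (heat_step (step_prob N) ^^ n) (ramp (real N) \<sigma>) i)
                     + \<theta>^2 * exp (\<bar>\<theta>\<bar> / real N) / 2 * (real n / real N ^ 2)))"
proof -
  let ?r = "step_prob N"
  interpret lazy_walk ?r using assms(1) by (rule lazy_walk_step_prob)
  define h where "h k = (heat_step ?r ^^ (n - k)) (ramp (real N) \<sigma>)" for k
  have grad: "\<bar>h (Suc k) (x + 1) - h (Suc k) x\<bar> \<le> 1 / real N" for k x
    unfolding h_def using assms by (intro heat_iter_ramp_diff) auto
  have "(\<integral>\<^sup>+s. ennreal (exp (\<theta> * linear_stat N (h n) s)) \<partial>iter_law N n)
      \<le> ennreal (exp (\<theta> * linear_stat N (h 0) init_state + \<theta>^2 * exp (\<bar>\<theta>\<bar> * (1 / real N)) / 2 * (\<Sum>k<n. (1 / real N)^2)))"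
  proof (rule exp_linear_stat_iter_le)
    show "h k = heat_step ?r (h (Suc k))" if "k < n" for k
    proof -
      have "n - k = Suc (n - Suc k)" using that by simp
      then show ?thesis by (simp add: h_def)
    qed
    show "quad_var N (h (Suc k)) s \<le> (1 / real N)^2" for k s by (rule quad_var_le_sq[where h="h (Suc k)"]) (rule grad)
    show "\<bar>h (Suc k) (x + 1) - h (Suc k) x\<bar> \<le> 1 / real N" for k x by (rule grad)
  qed
  then show ?thesis by (simp add: h_def linear_stat_init power_divide)
qed

section \<open>The diffusive time scale\<close>

definition diffusion_const :: "real \<Rightarrow> real" where
  "diffusion_const T = 6 * sqrt (1 + 2 * T)"

definition window_mass :: "real \<Rightarrow> real" where
  "window_mass T = 1 / (16 * (sqrt T + 1))"

lemma diffusion_const_ge: "0 \<le> T \<Longrightarrow> 6 \<le> diffusion_const T"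
  by (simp add: diffusion_const_def)

lemma window_mass_pos: "0 \<le> T \<Longrightarrow> 0 < window_mass T"
  unfolding window_mass_def by (intro divide_pos_pos mult_pos_pos) (auto intro: add_nonneg_pos)

lemma step_prob_mul_typical_le:
  assumes "real n \<le> 2 * exp 1 * (unif_rate N * t)" "0 \<le> t"
  shows "step_prob N * real n \<le> 3 * t"
proof -
  have "step_prob N * real n \<le> step_prob N * (2 * exp 1 * (unif_rate N * t))"
    using assms(1) by (intro mult_left_mono) (auto simp: step_prob_def)
  also have "\<dots> = exp 1 * t" by (simp add: step_prob_def unif_rate_def field_simps)
  also have "\<dots> \<le> 3 * t" using assms(2) exp_le by (intro mult_right_mono) auto
  finally show ?thesis .
qed

lemma sqrt_diffusive_le:
  assumes "1 \<le> N" "0 \<le> T" "r * real n \<le> 3 * real N ^ 2 * T"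
  shows "6 * sqrt (1 + r * real n / 2) \<le> diffusion_const T * real N"
proof -
  have "1 \<le> real N ^ 2" "0 \<le> real N ^ 2 * T" using assms(1,2) by simp_all
  moreover have "real N ^ 2 * (1 + 2 * T) = real N ^ 2 + 2 * (real N ^ 2 * T)" by (simp add: algebra_simps)
  ultimately have "1 + r * real n / 2 \<le> real N ^ 2 * (1 + 2 * T)" using assms(3) by linarith
  then have "sqrt (1 + r * real n / 2) \<le> sqrt (real N ^ 2 * (1 + 2 * T))" by (rule real_sqrt_le_mono)
  then show ?thesis by (simp add: diffusion_const_def real_sqrt_mult mult_ac)
qed

lemma exp_moment_heaviside_diffusive_le:
  assumes N: "1 \<le> N" and T: "0 \<le> T" and \<sigma>: "\<sigma> \<in> {1, -1}" and \<theta>: "\<bar>\<theta>\<bar> \<le> 1/2"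
    and n: "step_prob N * real n \<le> 3 * real N ^ 2 * T"
  shows "(\<integral>\<^sup>+s. ennreal (exp (\<theta> * linear_stat N (\<lambda>x. heaviside (\<sigma> * x - y)) s)) \<partial>iter_law N n)
     \<le> ennreal (exp (\<theta> * (\<Sum>i\<in>{-int N..int N}. heat_cdf (step_prob N) n (\<sigma> * i - y))
                     + 2 * \<theta>^2 * diffusion_const T * real N))"
proof -
  have "\<theta>^2 * exp \<bar>\<theta>\<bar> \<le> \<theta>^2 * 2" using \<theta> by (intro mult_left_mono exp_le_two) auto
  then have "\<theta>^2 * exp \<bar>\<theta>\<bar> * (6 * sqrt (1 + step_prob N * n / 2)) \<le> (\<theta>^2 * 2) * (diffusion_const T * real N)"
    by (intro mult_mono[OF _ sqrt_diffusive_le[OF N T n]]) (simp_all add: step_prob_def)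
  then show ?thesis
    using exp_moment_heaviside_le[OF N \<sigma>, where \<theta>=\<theta> and y=y and n=n]
    by (elim order_trans) (simp add: ac_simps)
qed

context lazy_walk
begin

lemma heat_mass_diffusive_window:
  assumes "1 \<le> N" "0 \<le> T" "r * real n \<le> 3 * real N ^ 2 * T"
  shows "window_mass T \<le> heat_mass r n (int (N div 2))"
proof -
  define K where "K = int (N div 2)"
  define L where "L = max K \<lceil>4 * real N * sqrt T\<rceil>"
  have "0 \<le> K" "K \<le> L" by (simp_all add: K_def L_def)
  have "real N \<le> 2 * of_int K + 1" unfolding K_def by linarith
  have L_le: "2 * of_int L + 1 \<le> real N * (8 * sqrt T + 4)"
  proof -
    have "real N * (8 * sqrt T + 4) = 2 * (4 * real N * sqrt T) + 4 * real N" by (simp add: algebra_simps)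
    moreover have "0 \<le> 4 * real N * sqrt T" using assms(2) by simp
    moreover have "of_int \<lceil>4 * real N * sqrt T\<rceil> \<le> 4 * real N * sqrt T + 1"
      by (rule of_int_ceiling_le_add_one)
    moreover have "2 * of_int K + 1 \<le> real N + 1" unfolding K_def by linarith
    moreover have "L = K \<or> L = \<lceil>4 * real N * sqrt T\<rceil>" by (simp add: L_def max_def)
    moreover have "1 \<le> real N" using assms(1) by simp
    ultimately show ?thesis by (elim disjE) linarith+
  qed
  have "16 * real N ^ 2 * T \<le> (of_int L + 1)^2"
  proof -
    have "4 * real N * sqrt T \<le> of_int L + 1" unfolding L_def by linarith
    then have "(4 * real N * sqrt T)^2 \<le> (of_int L + 1)^2" by (rule power_mono) (simp add: assms(2))
    then show ?thesis using assms(2) by (simp add: power_mult_distrib)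
  qed
  moreover have "0 \<le> real N ^ 2 * T" using assms(2) by simp
  ultimately have "4 * (r * real n) \<le> (of_int L + 1)^2" using assms(3) by linarith
  then have "2 * r * real n / (of_int L + 1)^2 \<le> 1 / 2"
    using \<open>0 \<le> K\<close> \<open>K \<le> L\<close> by (simp add: divide_le_eq)
  moreover have "1 / (8 * sqrt T + 4) \<le> (2 * of_int K + 1) / (2 * of_int L + 1)"
  proof -
    have "real N / (real N * (8 * sqrt T + 4)) \<le> (2 * of_int K + 1) / (2 * of_int L + 1)"
    proof (rule frac_le)
      show "0 < 2 * of_int L + (1::real)" using \<open>0 \<le> K\<close> \<open>K \<le> L\<close> by linarith
    qed (use \<open>real N \<le> 2 * of_int K + 1\<close> L_le in auto)
    then show ?thesis using assms(1) by simp
  qed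
  ultimately have "1 / (8 * sqrt T + 4) * (1 / 2)
      \<le> (2 * of_int K + 1) / (2 * of_int L + 1) * (1 - 2 * r * real n / (of_int L + 1)^2)"
    using \<open>0 \<le> K\<close> \<open>K \<le> L\<close> by (intro mult_mono) auto
  also have "\<dots> \<le> heat_mass r n K" by (rule heat_mass_lower_bound[OF \<open>0 \<le> K\<close> \<open>K \<le> L\<close>])
  finally have "1 / (2 * (8 * sqrt T + 4)) \<le> heat_mass r n K" by simp
  moreover have "1 / (16 * (sqrt T + 1)) \<le> 1 / (2 * (8 * sqrt T + 4))"
    using assms(2) by (intro divide_left_mono) (auto intro!: mult_pos_pos add_nonneg_pos)
  ultimately show ?thesis by (simp add: K_def window_mass_def)
qed

end

section \<open>Tail bounds after a fixed number of steps\<close>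

lemma prob_current_ge:
  assumes N: "1 \<le> N" and T: "0 \<le> T" and a: "0 \<le> a" "a \<le> 1"
    and n: "step_prob N * real n \<le> 3 * real N ^ 2 * T"
  shows "measure_pmf.prob (iter_law N n) {s. a \<le> \<bar>real_of_int (snd s)\<bar> / real N}
     \<le> 3 * exp (- (a^2 / (8 * diffusion_const T)) * real N)"
proof -
  interpret lazy_walk "step_prob N" using N by (rule lazy_walk_step_prob)
  define \<kappa> where "\<kappa> = diffusion_const T"
  define \<theta> where "\<theta> = a / (4 * \<kappa>)"
  define S where "S = (\<Sum>i\<in>{-int N..int N}. heat_cdf (step_prob N) n i)"
  define Q where "Q = 2 * \<theta>^2 * \<kappa> * real N"
  have \<kappa>: "6 \<le> \<kappa>" using diffusion_const_ge[OF T] by (simp add: \<kappa>_def)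
  have \<theta>: "0 \<le> \<theta>" "\<theta> \<le> 1/4" using a \<kappa> by (simp_all add: \<theta>_def field_simps)
  have S: "real N \<le> S" "S \<le> real N + 1" using heat_cdf_sum_bounds[where N=N and m=n] by (simp_all add: S_def)
  have moment: "(\<integral>\<^sup>+s. ennreal (exp (t * linear_stat N heaviside s)) \<partial>iter_law N n) \<le> ennreal (exp (t * S + Q))"
    if "\<bar>t\<bar> = \<theta>" for t
  proof -
    have "t^2 = \<theta>^2" using that power2_abs[of t] by simp
    then show ?thesis
      using exp_moment_heaviside_diffusive_le[OF N T _ _ n, where \<sigma>=1 and \<theta>=t and y=0] that \<theta>
      by (simp add: S_def Q_def \<kappa>_def)
  qed
  have "measure_pmf.prob (iter_law N n) {s. a \<le> \<bar>real_of_int (snd s)\<bar> / real N}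
      \<le> exp (- \<theta> * ((real N + 1) + a * real N)) * exp (\<theta> * S + Q)
        + exp (- \<theta> * (a * real N - (real N + 1))) * exp (- \<theta> * S + Q)"
  proof (rule prob_deviation_le[where f="linear_stat N heaviside", OF _ _ _ moment moment])
    show "a * real N \<le> \<bar>linear_stat N heaviside s - (real N + 1)\<bar>"
      if "s \<in> set_pmf (iter_law N n)" "s \<in> {s. a \<le> \<bar>real_of_int (snd s)\<bar> / real N}" for s
      using ssep_invariant_iter_law[OF that(1)] that(2) N
      by (simp add: ssep_invariant_def pos_le_divide_eq)
  qed (use \<theta> in simp_all)
  also have "\<dots> \<le> exp (- \<theta> * a * real N + Q) + exp \<theta> * exp (- \<theta> * a * real N + Q)"
  proof (intro add_mono)
    have "\<theta> * (S - (real N + 1)) \<le> 0" using S \<theta> by (simp add: mult_nonpos_nonneg mult_le_0_iff)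
    then show "exp (- \<theta> * ((real N + 1) + a * real N)) * exp (\<theta> * S + Q) \<le> exp (- \<theta> * a * real N + Q)"
      by (simp add: exp_add[symmetric] algebra_simps)
    have "\<theta> * (real N + 1 - S) \<le> \<theta>" using S \<theta> mult_left_mono[of "real N + 1 - S" 1 \<theta>] by simp
    then show "exp (- \<theta> * (a * real N - (real N + 1))) * exp (- \<theta> * S + Q) \<le> exp \<theta> * exp (- \<theta> * a * real N + Q)"
      by (simp add: exp_add[symmetric] algebra_simps)
  qed
  also have "\<dots> = (1 + exp \<theta>) * exp (- \<theta> * a * real N + Q)" by (simp add: algebra_simps)
  also have "\<dots> \<le> 3 * exp (- \<theta> * a * real N + 2 * \<theta>^2 * \<kappa> * real N)"
    using exp_le_two[of \<theta>] \<theta> by (intro mult_mono) (auto simp: Q_def)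
  also have "- \<theta> * a * real N + 2 * \<theta>^2 * \<kappa> * real N = - (a^2 / (8 * \<kappa>)) * real N"
    using \<kappa> by (simp add: \<theta>_def power2_eq_square field_simps)
  finally show ?thesis by (simp add: \<kappa>_def)
qed

lemma sum_heat_cdf_shifted_le:
  fixes \<sigma> :: int
  assumes N: "1 \<le> N" and T: "0 \<le> T" and a: "0 \<le> a" "a \<le> 1/4" and \<sigma>: "\<sigma> \<in> {1, -1}"
    and n: "step_prob N * real n \<le> 3 * real N ^ 2 * T"
  shows "(\<Sum>i\<in>{-int N..int N}. heat_cdf (step_prob N) n (\<sigma> * i - \<lceil>a * real N\<rceil>))
      \<le> real N + 1 - a * real N * window_mass T"
proof -
  interpret lazy_walk "step_prob N" using N by (rule lazy_walk_step_prob)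
  define y where "y = nat \<lceil>a * real N\<rceil>"
  have "0 \<le> a * real N" using a by simp
  then have "0 \<le> \<lceil>a * real N\<rceil>" by linarith
  then have y: "\<lceil>a * real N\<rceil> = int y" "a * real N \<le> real y" "real y \<le> a * real N + 1"
    unfolding y_def using le_of_int_ceiling[of "a * real N"] of_int_ceiling_le_add_one[of "a * real N"]
    by simp_all
  have "(\<Sum>i\<in>{-int N..int N}. heat_cdf (step_prob N) n (\<sigma> * i - int y))
      = (\<Sum>i\<in>{-int N..int N}. heat_cdf (step_prob N) n (i - int y))"
    by (rule sum_reflect_interval[OF \<sigma>, where f="\<lambda>i. heat_cdf (step_prob N) n (i - int y)"])
  also have "\<dots> \<le> real N + 1 - real y * heat_mass (step_prob N) n (int (N div 2))"
  proof (rule heat_cdf_shifted_sum_le)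
    have "a * real N \<le> 1 / 4 * real N" using a by (intro mult_right_mono) auto
    moreover have "real (N div 2) \<le> real N / 2" by linarith
    ultimately have "real (y + N div 2) \<le> real (N + 1)" using y by simp
    then show "int y + int (N div 2) \<le> int N + 1" by linarith
  qed simp_all
  also have "\<dots> \<le> real N + 1 - a * real N * window_mass T"
    using heat_mass_diffusive_window[OF N T n] y(2) window_mass_pos[OF T] a
    by (smt (verit) mult_mono mult_nonneg_nonneg of_nat_0_le_iff)
  finally show ?thesis by (simp add: y(1))
qed

lemma prob_tagged_ge_small:
  fixes \<sigma> :: int
  assumes N: "1 \<le> N" and T: "0 \<le> T" and a: "0 \<le> a" "a \<le> 1/4" and \<sigma>: "\<sigma> \<in> {1, -1}"
    and n: "step_prob N * real n \<le> 3 * real N ^ 2 * T"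
  shows "measure_pmf.prob (iter_law N n) {s. a * real N \<le> real_of_int (\<sigma> * fst s 0)}
     \<le> exp (- (a^2 * window_mass T ^ 2 / (8 * diffusion_const T)) * real N)"
proof -
  define \<kappa> where "\<kappa> = diffusion_const T"
  define m where "m = window_mass T"
  define \<theta> where "\<theta> = a * m / (4 * \<kappa>)"
  define y where "y = \<lceil>a * real N\<rceil>"
  define S where "S = (\<Sum>i\<in>{-int N..int N}. heat_cdf (step_prob N) n (\<sigma> * i - y))"
  have \<kappa>: "6 \<le> \<kappa>" using diffusion_const_ge[OF T] by (simp add: \<kappa>_def)
  have "1 \<le> 16 * (sqrt T + 1)" using T by simp
  then have m: "0 < m" "m \<le> 1" unfolding m_def window_mass_def by simp_all
  have \<theta>: "0 \<le> \<theta>" "\<theta> \<le> 1/4"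
    using a m \<kappa> mult_mono[of a 1 m 1] by (simp_all add: \<theta>_def field_simps)
  have S: "S \<le> real N + 1 - a * real N * m"
    unfolding S_def y_def m_def by (rule sum_heat_cdf_shifted_le[OF N T a \<sigma> n])
  have "measure_pmf.prob (iter_law N n) {s. a * real N \<le> real_of_int (\<sigma> * fst s 0)}
      \<le> exp (- \<theta> * (real N + 1)) * exp (\<theta> * S + 2 * \<theta>^2 * \<kappa> * real N)"
  proof (rule prob_le_exp_moment[where f="linear_stat N (\<lambda>x. heaviside (\<sigma> * x - y))"])
    show "(\<integral>\<^sup>+s. ennreal (exp (\<theta> * linear_stat N (\<lambda>x. heaviside (\<sigma> * x - y)) s)) \<partial>iter_law N n)
        \<le> ennreal (exp (\<theta> * S + 2 * \<theta>^2 * \<kappa> * real N))"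
      using \<theta> by (simp add: S_def \<kappa>_def exp_moment_heaviside_diffusive_le[OF N T \<sigma> _ n])
    show "real N + 1 \<le> linear_stat N (\<lambda>x. heaviside (\<sigma> * x - y)) s"
      if "s \<in> set_pmf (iter_law N n)" "s \<in> {s. a * real N \<le> real_of_int (\<sigma> * fst s 0)}" for s
    proof -
      have "y \<le> \<sigma> * fst s 0" using that(2) by (simp add: y_def ceiling_le_iff)
      then have "(real N + 1) * 1 \<le> linear_stat N (\<lambda>x. heaviside (\<sigma> * x - y)) s"
        using ssep_invariant_iter_law[OF that(1)] \<sigma>
        by (intro linear_stat_ge_tagged_side) (auto simp: heaviside_def)
      then show ?thesis by simp
    qed
  qed (use \<theta> in simp_all)
  also have "\<dots> \<le> exp (- \<theta> * (a * real N * m) + 2 * \<theta>^2 * \<kappa> * real N)"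
    using mult_left_mono[OF S \<theta>(1)] by (simp add: exp_add[symmetric] algebra_simps)
  also have "- \<theta> * (a * real N * m) + 2 * \<theta>^2 * \<kappa> * real N = - (a^2 * m^2 / (8 * \<kappa>)) * real N"
    using \<kappa> by (simp add: \<theta>_def power2_eq_square field_simps)
  finally show ?thesis by (simp add: \<kappa>_def m_def)
qed

lemma sum_heat_iter_ramp_le:
  fixes \<sigma> :: int
  assumes N: "1 \<le> N" and T: "0 \<le> T" and \<sigma>: "\<sigma> \<in> {1, -1}"
    and n: "step_prob N * real n \<le> 3 * real N ^ 2 * T"
  shows "(\<Sum>i\<in>{-int N..int N}. (heat_step (step_prob N) ^^ n) (ramp (real N) \<sigma>) i) \<le> 3 * real N * (1 + 3 * T)"
proof -
  interpret lazy_walk "step_prob N" using N by (rule lazy_walk_step_prob)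
  have Npos: "0 < real N" using N by simp
  have "(heat_step (step_prob N) ^^ n) (ramp (real N) \<sigma>) i \<le> 1 + 3 * T" if "i \<in> {-int N..int N}" for i
  proof -
    have "\<bar>real_of_int i\<bar> \<le> \<bar>real N\<bar>" using that by auto
    then have "(of_int i)^2 \<le> (real N)^2" by (simp only: abs_le_square_iff)
    then have "((of_int i)^2 + (real N)^2) / (2 * (real N)^2) \<le> 1" using Npos by (simp add: field_simps)
    moreover have "real n * step_prob N / (real N)^2 \<le> 3 * T" using n Npos by (simp add: field_simps)
    ultimately show ?thesis using heat_iter_ramp_le[OF \<sigma> Npos, of n i] by simp
  qed
  then have "(\<Sum>i\<in>{-int N..int N}. (heat_step (step_prob N) ^^ n) (ramp (real N) \<sigma>) i)
      \<le> (\<Sum>i\<in>{-int N..int N}. 1 + 3 * T)" by (rule sum_mono)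
  also have "\<dots> = (2 * real N + 1) * (1 + 3 * T)" by simp
  also have "\<dots> \<le> 3 * real N * (1 + 3 * T)" using N T by (intro mult_right_mono) auto
  finally show ?thesis .
qed

lemma steps_div_sq_le:
  assumes N: "1 \<le> N" and T: "0 \<le> T" and n: "step_prob N * real n \<le> 3 * real N ^ 2 * T"
  shows "real n / real N ^ 2 \<le> 18 * T * real N"
proof -
  have "real n \<le> 3 * real N ^ 2 * T * (2 * (2 * real N + 1))"
    using n by (simp add: step_prob_def field_simps)
  also have "\<dots> \<le> 3 * real N ^ 2 * T * (6 * real N)"
    using N T by (intro mult_left_mono) auto
  finally show ?thesis using N by (simp add: field_simps power2_eq_square)
qed

lemma prob_tagged_ge_large:
  fixes \<sigma> :: int
  assumes N: "1 \<le> N" and T: "0 < T" and a: "6 * (1 + 3 * T) \<le> a" "a \<le> 36 * T * real N"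
    and \<sigma>: "\<sigma> \<in> {1, -1}" and n: "step_prob N * real n \<le> 3 * real N ^ 2 * T"
  shows "measure_pmf.prob (iter_law N n) {s. a * real N \<le> real_of_int (\<sigma> * fst s 0)}
     \<le> exp (- (a^2 / (288 * T)) * real N)"
proof -
  define \<theta> where "\<theta> = a / (72 * T)"
  define S where "S = (\<Sum>i\<in>{-int N..int N}. (heat_step (step_prob N) ^^ n) (ramp (real N) \<sigma>) i)"
  define Q where "Q = \<theta>^2 * exp (\<bar>\<theta>\<bar> / real N) / 2 * (real n / real N ^ 2)"
  have Npos: "0 < real N" using N by simp
  have a0: "0 \<le> a" using a(1) T by simp
  have \<theta>: "0 \<le> \<theta>" "\<theta> / real N \<le> 1/2" using a0 a(2) T Npos by (simp_all add: \<theta>_def field_simps)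
  have n_le: "real n / real N ^ 2 \<le> 18 * T * real N"
    using N T n by (intro steps_div_sq_le) auto
  have Q: "Q \<le> 18 * \<theta>^2 * T * real N"
  proof -
    have "exp (\<bar>\<theta>\<bar> / real N) \<le> 2" using \<theta> Npos by (intro exp_le_two) auto
    then have "\<theta>^2 * exp (\<bar>\<theta>\<bar> / real N) \<le> \<theta>^2 * 2" by (rule mult_left_mono) simp
    then have "\<theta>^2 * exp (\<bar>\<theta>\<bar> / real N) / 2 \<le> \<theta>^2" by simp
    then have "Q \<le> \<theta>^2 * (18 * T * real N)"
      unfolding Q_def using n_le by (intro mult_mono) auto
    then show ?thesis by (simp add: ac_simps)
  qed
  have S: "S \<le> 3 * real N * (1 + 3 * T)"
    unfolding S_def using N T \<sigma> n by (intro sum_heat_iter_ramp_le) auto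
  have "measure_pmf.prob (iter_law N n) {s. a * real N \<le> real_of_int (\<sigma> * fst s 0)}
      \<le> exp (- \<theta> * ((real N + 1) * a)) * exp (\<theta> * S + Q)"
  proof (rule prob_le_exp_moment[where f="linear_stat N (ramp (real N) \<sigma>)"])
    show "(\<integral>\<^sup>+s. ennreal (exp (\<theta> * linear_stat N (ramp (real N) \<sigma>) s)) \<partial>iter_law N n) \<le> ennreal (exp (\<theta> * S + Q))"
      using exp_moment_ramp_le[OF N \<sigma>, where \<theta>=\<theta> and n=n] by (simp add: S_def Q_def)
    show "(real N + 1) * a \<le> linear_stat N (ramp (real N) \<sigma>) s"
      if "s \<in> set_pmf (iter_law N n)" "s \<in> {s. a * real N \<le> real_of_int (\<sigma> * fst s 0)}" for s
      using ssep_invariant_iter_law[OF that(1)] \<sigma> that(2) Npos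
      by (intro linear_stat_ge_tagged_side) (auto simp: ramp_def pos_le_divide_eq)
  qed (use \<theta> in simp_all)
  also have "\<dots> \<le> exp (- \<theta> * (a * real N / 2) + 18 * \<theta>^2 * T * real N)"
  proof -
    have "6 * (1 + 3 * T) * real N \<le> a * real N" using a(1) Npos by (intro mult_right_mono) auto
    then have "3 * real N * (1 + 3 * T) \<le> a * real N / 2" by (simp add: algebra_simps)
    then have "\<theta> * S \<le> \<theta> * ((real N + 1) * a - a * real N / 2)"
      using S \<theta> a0 by (intro mult_left_mono) (auto simp: algebra_simps)
    then show ?thesis using Q by (simp add: exp_add[symmetric] algebra_simps)
  qed
  also have "- \<theta> * (a * real N / 2) + 18 * \<theta>^2 * T * real N = - (a^2 / (288 * T)) * real N"
    using T by (simp add: \<theta>_def power2_eq_square field_simps)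
  finally show ?thesis .
qed

lemma prob_tagged_abs_le:
  assumes "1 \<le> N"
    and "\<And>\<sigma>. \<sigma> \<in> {1, -1::int} \<Longrightarrow> measure_pmf.prob (iter_law N n) {s. a * real N \<le> real_of_int (\<sigma> * fst s 0)} \<le> B"
  shows "measure_pmf.prob (iter_law N n) {s. \<bar>real_of_int (fst s 0)\<bar> / real N \<ge> a} \<le> 2 * B"
proof -
  have eq: "{s. \<bar>real_of_int (fst s 0)\<bar> / real N \<ge> a} = {s. a * real N \<le> \<bar>real_of_int (fst s 0)\<bar>}"
    using assms(1) by (auto simp: le_divide_eq)
  have "measure_pmf.prob (iter_law N n) {s. a * real N \<le> \<bar>real_of_int (fst s 0)\<bar>}
      \<le> measure_pmf.prob (iter_law N n) {s. a * real N \<le> real_of_int (fst s 0)}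
        + measure_pmf.prob (iter_law N n) {s. a * real N \<le> - real_of_int (fst s 0)}"
    by (rule prob_abs_ge_le)
  moreover have "measure_pmf.prob (iter_law N n) {s. a * real N \<le> real_of_int (fst s 0)} \<le> B"
    using assms(2)[of 1] by simp
  moreover have "measure_pmf.prob (iter_law N n) {s. a * real N \<le> - real_of_int (fst s 0)} \<le> B"
    using assms(2)[of "-1"] by simp
  ultimately show ?thesis unfolding eq by linarith
qed

section \<open>Uniformisation and the large deviation bounds\<close>

lemma ssep_prob_mono:
  assumes "A \<subseteq> B" "0 \<le> t"
  shows "ssep_prob N t A \<le> ssep_prob N t B"
proof -
  define \<mu> where "\<mu> = unif_rate N * t"
  have "0 \<le> \<mu>" using assms(2) by (simp add: \<mu>_def unif_rate_def)
  have eq: "ssep_prob N t C = (\<Sum>n. exp (- \<mu>) * \<mu> ^ n / fact n * measure_pmf.prob (iter_law N n) C)" for C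
    by (simp add: ssep_prob_def \<mu>_def)
  show ?thesis
    unfolding eq using \<open>0 \<le> \<mu>\<close> assms(1)
    by (intro suminf_le summable_poisson_mixture mult_left_mono measure_pmf.finite_measure_mono) auto
qed

lemma limsup_ssep_prob_le:
  assumes T: "0 < T" and "0 \<le> \<beta>" "0 < C"
    and bound: "\<forall>\<^sub>F N in sequentially. \<forall>n. step_prob N * real n \<le> 3 * real N ^ 2 * T
        \<longrightarrow> measure_pmf.prob (iter_law N n) (E N) \<le> C * exp (- \<beta> * real N)"
  shows "limsup (\<lambda>N::nat. ereal (1 / real N) * eln (ssep_prob N (real N ^ 2 * T) (E N))) \<le> ereal (- \<beta>)"
proof (rule limsup_scaled_eln_le[where C="C + 1"])
  show "\<forall>\<^sub>F N in sequentially. ssep_prob N (real N ^ 2 * T) (E N) \<le> (C + 1) * exp (- \<beta> * real N)"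
    using bound eventually_real_ge[of "\<beta> / T"]
  proof eventually_elim
    case (elim N)
    define \<mu> where "\<mu> = unif_rate N * (real N ^ 2 * T)"
    have "0 \<le> \<mu>" using T by (simp add: \<mu>_def unif_rate_def)
    have "ssep_prob N (real N ^ 2 * T) (E N)
        = (\<Sum>n. exp (- \<mu>) * \<mu> ^ n / fact n * measure_pmf.prob (iter_law N n) (E N))"
      by (simp add: ssep_prob_def \<mu>_def)
    also have "\<dots> \<le> C * exp (- \<beta> * real N) + exp (- \<mu>)"
    proof (rule poisson_mixture_le[OF \<open>0 \<le> \<mu>\<close>])
      show "measure_pmf.prob (iter_law N n) (E N) \<le> C * exp (- \<beta> * real N)"
        if "real n \<le> 2 * exp 1 * \<mu>" for n
        using elim(1) step_prob_mul_typical_le[of n N "real N ^ 2 * T"] that T by (simp add: \<mu>_def)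
    qed (use \<open>0 < C\<close> in auto)
    also have "exp (- \<mu>) \<le> exp (- \<beta> * real N)"
    proof -
      have "\<beta> * real N \<le> (real N * T) * real N"
        using elim(2) T by (intro mult_right_mono) (simp_all add: field_simps)
      also have "\<dots> \<le> \<mu>"
        using T by (simp add: \<mu>_def unif_rate_def power2_eq_square mult_right_mono field_simps)
      finally show ?thesis by simp
    qed
    finally show ?case by (simp add: algebra_simps)
  qed
qed (use \<open>0 < C\<close> in simp)

definition current_tail_exponent :: "real \<Rightarrow> real \<Rightarrow> ereal" where
  "current_tail_exponent T a = limsup (\<lambda>N::nat. ereal (1 / real N) * eln (ssep_prob N (real N ^ 2 * T)
      {s. \<bar>real_of_int (snd s)\<bar> / real N \<ge> a}))"

definition tagged_tail_exponent :: "real \<Rightarrow> real \<Rightarrow> ereal" where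
  "tagged_tail_exponent T a = limsup (\<lambda>N::nat. ereal (1 / real N) * eln (ssep_prob N (real N ^ 2 * T)
      {s. \<bar>real_of_int (fst s 0)\<bar> / real N \<ge> a}))"

lemma current_tail_exponent_le:
  assumes T: "0 < T" and a: "0 \<le> a"
  shows "current_tail_exponent T a \<le> (if a \<le> 1 then ereal (- (a^2 / (8 * diffusion_const T))) else - \<infinity>)"
proof (cases "a \<le> 1")
  case True
  have "limsup (\<lambda>N::nat. ereal (1 / real N) * eln (ssep_prob N (real N ^ 2 * T)
        {s. \<bar>real_of_int (snd s)\<bar> / real N \<ge> a})) \<le> ereal (- (a^2 / (8 * diffusion_const T)))"
  proof (rule limsup_ssep_prob_le[where C=3, OF T])
    show "\<forall>\<^sub>F N in sequentially. \<forall>n. step_prob N * real n \<le> 3 * real N ^ 2 * T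
        \<longrightarrow> measure_pmf.prob (iter_law N n) {s. \<bar>real_of_int (snd s)\<bar> / real N \<ge> a}
            \<le> 3 * exp (- (a^2 / (8 * diffusion_const T)) * real N)"
      using eventually_ge_at_top[of "1::nat"]
      by eventually_elim (use prob_current_ge[OF _ less_imp_le[OF T] a True] in auto)
  qed (use diffusion_const_ge[of T] T in simp_all)
  then show ?thesis using True by (simp add: current_tail_exponent_def)
next
  case False
  have "\<forall>\<^sub>F N in sequentially. ssep_prob N (real N ^ 2 * T) {s. \<bar>real_of_int (snd s)\<bar> / real N \<ge> a} \<le> 0"
    using eventually_real_ge[of "2 / (a - 1)"]
  proof eventually_elim
    case (elim N)
    then have N: "real N + 1 < a * real N" using False by (simp add: field_simps)
    have "set_pmf (iter_law N n) \<inter> {s. \<bar>real_of_int (snd s)\<bar> / real N \<ge> a} = {}" for n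
      using ssep_invariant_current_bound[OF ssep_invariant_iter_law] N
      by (force simp: le_divide_eq split: if_splits)
    then have "measure_pmf.prob (iter_law N n) {s. \<bar>real_of_int (snd s)\<bar> / real N \<ge> a} = 0" for n
      by (simp add: measure_pmf_zero_iff)
    then show ?case by (simp add: ssep_prob_def)
  qed
  then show ?thesis using False limsup_scaled_eln_neg_inf by (simp add: current_tail_exponent_def)
qed

lemma tagged_tail_exponent_small:
  assumes T: "0 < T" and a: "0 \<le> a" "a \<le> 1/4"
  shows "tagged_tail_exponent T a \<le> ereal (- (a^2 * window_mass T ^ 2 / (8 * diffusion_const T)))"
  unfolding tagged_tail_exponent_def
proof (rule limsup_ssep_prob_le[where C=2, OF T])
  show "\<forall>\<^sub>F N in sequentially. \<forall>n. step_prob N * real n \<le> 3 * real N ^ 2 * T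
      \<longrightarrow> measure_pmf.prob (iter_law N n) {s. \<bar>real_of_int (fst s 0)\<bar> / real N \<ge> a}
          \<le> 2 * exp (- (a^2 * window_mass T ^ 2 / (8 * diffusion_const T)) * real N)"
    using eventually_ge_at_top[of "1::nat"]
  proof eventually_elim
    case (elim N)
    show ?case
      using prob_tagged_abs_le[OF elim prob_tagged_ge_small[OF elim less_imp_le[OF T] a]] by blast
  qed
qed (use window_mass_pos[of T] diffusion_const_ge[of T] T in auto)

lemma tagged_tail_exponent_large:
  assumes T: "0 < T" and a: "6 * (1 + 3 * T) \<le> a"
  shows "tagged_tail_exponent T a \<le> ereal (- (a^2 / (288 * T)))"
  unfolding tagged_tail_exponent_def
proof (rule limsup_ssep_prob_le[where C=2, OF T])
  show "\<forall>\<^sub>F N in sequentially. \<forall>n. step_prob N * real n \<le> 3 * real N ^ 2 * T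
      \<longrightarrow> measure_pmf.prob (iter_law N n) {s. \<bar>real_of_int (fst s 0)\<bar> / real N \<ge> a}
          \<le> 2 * exp (- (a^2 / (288 * T)) * real N)"
    using eventually_ge_at_top[of "1::nat"] eventually_real_ge[of "a / (36 * T)"]
  proof eventually_elim
    case (elim N)
    then have "a \<le> 36 * T * real N" using T by (simp add: field_simps)
    then show ?case
      using prob_tagged_abs_le[OF elim(1) prob_tagged_ge_large[OF elim(1) T a]] by blast
  qed
qed (use T in auto)

lemma tagged_tail_exponent_antimono:
  assumes "0 \<le> T" "a \<le> b"
  shows "tagged_tail_exponent T b \<le> tagged_tail_exponent T a"
proof -
  have "{s. \<bar>real_of_int (fst s 0)\<bar> / real N \<ge> b} \<subseteq> {s. \<bar>real_of_int (fst s 0)\<bar> / real N \<ge> a}" for N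
    using assms(2) by (intro Collect_mono impI) linarith
  then show ?thesis
    unfolding tagged_tail_exponent_def using assms(1) by (intro limsup_scaled_eln_mono ssep_prob_mono) auto
qed

lemma tagged_tail_exponent_le:
  assumes T: "0 < T"
  shows "\<exists>c>0. \<forall>a\<ge>0. tagged_tail_exponent T a \<le> ereal (- c * a^2)"
proof -
  define c\<^sub>s where "c\<^sub>s = window_mass T ^ 2 / (8 * diffusion_const T)"
  define A where "A = 6 * (1 + 3 * T)"
  define c where "c = min (c\<^sub>s / (16 * A^2)) (1 / (288 * T))"
  have c\<^sub>s: "0 < c\<^sub>s" using window_mass_pos[of T] diffusion_const_ge[of T] T by (simp add: c\<^sub>s_def)
  have A: "6 \<le> A" using T by (simp add: A_def)
  have "tagged_tail_exponent T a \<le> ereal (- c * a^2)" if "0 \<le> a" for a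
  proof -
    consider "a \<le> 1/4" | "A \<le> a" | "1/4 < a" "a < A" by fastforce
    then show ?thesis
    proof cases
      case 1
      have "6^2 \<le> A^2" using A by (intro power_mono) auto
      then have "c \<le> c\<^sub>s" using c\<^sub>s by (simp add: c_def divide_le_eq min_le_iff_disj)
      then have "c * a^2 \<le> c\<^sub>s * a^2" by (rule mult_right_mono) simp
      then have "ereal (- (a^2 * window_mass T ^ 2 / (8 * diffusion_const T))) \<le> ereal (- c * a^2)"
        by (simp add: c\<^sub>s_def mult.commute)
      with tagged_tail_exponent_small[OF T that 1] show ?thesis by (rule order_trans)
    next
      case 2
      have "c * a^2 \<le> 1 / (288 * T) * a^2" by (intro mult_right_mono) (auto simp: c_def)
      with tagged_tail_exponent_large[OF T 2[unfolded A_def]] show ?thesis by (simp add: order_trans)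
    next
      case 3
      \<comment> \<open>between the two regimes, use monotonicity in a and the bound at a = 1/4\<close>
      have "c * a^2 \<le> c\<^sub>s / (16 * A^2) * A^2"
        using 3 c\<^sub>s by (intro mult_mono power_mono) (auto simp: c_def)
      then have "ereal (- ((1/4)^2 * c\<^sub>s)) \<le> ereal (- c * a^2)" using A by (simp add: field_simps)
      with tagged_tail_exponent_antimono[of T "1/4" a] tagged_tail_exponent_small[of T "1/4"] T 3
      show ?thesis by (auto simp: c\<^sub>s_def intro: order_trans)
    qed
  qed
  moreover have "0 < c" using c\<^sub>s A T by (simp add: c_def)
  ultimately show ?thesis by blast
qed

theorem theorem1p4:
  fixes T :: real
  assumes "T > 0"
  shows "\<exists>c1>0. \<forall>a\<ge>0.
     limsup (\<lambda>N::nat. ereal (1 / real N) * eln (ssep_prob N (real N ^ 2 * T)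
        {s. \<bar>real_of_int (snd s)\<bar> / real N \<ge> a}))
       \<le> (if a \<le> 1 then ereal (- c1 * a ^ 2) else - \<infinity>)
   \<and> limsup (\<lambda>N::nat. ereal (1 / real N) * eln (ssep_prob N (real N ^ 2 * T)
        {s. \<bar>real_of_int (fst s 0)\<bar> / real N \<ge> a}))
       \<le> ereal (- c1 * a ^ 2)"
proof -
  obtain c where "0 < c" and tagged: "\<And>a. 0 \<le> a \<Longrightarrow> tagged_tail_exponent T a \<le> ereal (- c * a^2)"
    using tagged_tail_exponent_le[OF assms] by blast
  define c1 where "c1 = min (1 / (8 * diffusion_const T)) c"
  have "0 < c1" using \<open>0 < c\<close> diffusion_const_ge[of T] assms by (simp add: c1_def)
  moreover have "current_tail_exponent T a \<le> (if a \<le> 1 then ereal (- c1 * a ^ 2) else - \<infinity>)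
      \<and> tagged_tail_exponent T a \<le> ereal (- c1 * a ^ 2)" if "0 \<le> a" for a
  proof -
    have "c1 * a^2 \<le> 1 / (8 * diffusion_const T) * a^2" "c1 * a^2 \<le> c * a^2"
      by (intro mult_right_mono; simp add: c1_def)+
    then show ?thesis
      using current_tail_exponent_le[OF assms that] tagged[OF that] by (auto intro: order_trans)
  qed
  ultimately show ?thesis
    unfolding current_tail_exponent_def tagged_tail_exponent_def by blast
qed

end
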